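(* Let $d\ge2$, $\theta>0$, and let $D_{\theta,d}$ be the symmetric Dirichlet distribution on $\Delta_{(d-1)}$ with parameter $(\theta/d,\dots,\theta/d)$. For $n\ge0$ let $Q^{(\theta,d)}_n$ be the degree-$n$ Jacobi kernel of $D_{\theta,d}$, and let $Q^{(\theta,d)\downarrow}_n$ be the degree-$n$ kernel of $D_{\theta,d}$ restricted to symmetric functions (defined below). Then for all $x,y\in\Delta_{(d-1)}$, $$Q^{(\theta,d)\downarrow}_n(x,y)=\frac1{d!}\sum_{\sigma\in S_d}Q^{(\theta,d)}_n(\sigma x,y)=\frac{1}{(d!)^2}\sum_{\sigma,\tau\in S_d}Q^{(\theta,d)}_n(\sigma x,\tau y)=\sum_{m=0}^na^{\theta}_{nm}\frac1{d!}\sum_{\sigma\in S_d}\xi^{(\theta,d)}_m(\sigma x,y).$$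
   Context: $\Delta_{(d-1)}=\{x\in[0,1]^d:\sum_ix_i=1\}$; $S_d$ is the symmetric group, $\sigma x=(x_{\sigma(1)},\dots,x_{\sigma(d)})$. For a Dirichlet law $D_\beta$ (density proportional to $\prod x_i^{\beta_i-1}$), the Jacobi kernel $Q^\beta_n(x,y)=\sum_kP_k(x)P_k(y)$ with $(P_k)$ an $L^2(D_\beta)$-orthonormal basis of the polynomials of degree $\le n$ orthogonal to all lower-degree polynomials. $Q^{(\theta,d)\downarrow}_n(x,y)=\sum_kS_k(x)S_k(y)$ where $(S_k)$ is an $L^2(D_{\theta,d})$-orthonormal basis of the space of symmetric (i.e. $S_d$-invariant) polynomials of degree $\le n$ orthogonal to all symmetric polynomials of degree $<n$; it is the kernel of the ranked (decreasingly ordered) Dirichlet distribution. $a^{\theta}_{nm}=(\theta+2n-1)(-1)^{n-m}\frac{(\theta+m)_{(n-1)}}{m!(n-m)!}$ (with $a^\theta_{00}=1$), $(c)_{(k)}=\Gamma(c+k)/\Gamma(c)$. $\xi^{(\theta,d)}_m(x,y)=\sum_{l\in\mathbb Z^d_+,|l|=m}\binom{m}{l}^2x^ly^l/DM_{(\theta/d,\dots,\theta/d)}(l;m)$ where $DM_\beta(l;m)=\binom ml\prod_i(\beta_i)_{(l_i)}/(|\beta|)_{(m)}$. *)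

theory Defs
  imports "HOL-Analysis.Analysis"
begin

text \<open>Points of the dsimplex are functions nat => real, coordinates 0..d-1,
  and identically zero beyond d-1.\<close>

definition dsimplex :: "nat \<Rightarrow> (nat \<Rightarrow> real) set" where
  "dsimplex d = {x. (\<forall>i<d. 0 \<le> x i) \<and> (\<forall>i. d \<le> i \<longrightarrow> x i = 0) \<and> (\<Sum>i<d. x i) = 1}"

definition perm_act :: "(nat \<Rightarrow> nat) \<Rightarrow> (nat \<Rightarrow> real) \<Rightarrow> (nat \<Rightarrow> real)" where
  "perm_act \<sigma> x = (\<lambda>i. x (\<sigma> i))"

definition Sym :: "nat \<Rightarrow> (nat \<Rightarrow> nat) set" where
  "Sym d = {\<sigma>. \<sigma> permutes {..<d}}"

text \<open>Dirichlet law D_beta on the dsimplex, realised through the coordinates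
  u_0..u_(d-2) (Lebesgue measure), with x_(d-1) = 1 - sum u.\<close>

definition dlift :: "nat \<Rightarrow> (nat \<Rightarrow> real) \<Rightarrow> (nat \<Rightarrow> real)" where
  "dlift d u = (\<lambda>i. if i < d - 1 then u i else if i = d - 1 then 1 - (\<Sum>j<d-1. u j) else 0)"

definition dregion :: "nat \<Rightarrow> (nat \<Rightarrow> real) set" where
  "dregion d = {u. (\<forall>i<d-1. 0 \<le> u i) \<and> (\<Sum>j<d-1. u j) \<le> 1}"

definition dir_dens :: "nat \<Rightarrow> (nat \<Rightarrow> real) \<Rightarrow> (nat \<Rightarrow> real) \<Rightarrow> real" where
  "dir_dens d \<beta> x = (\<Prod>i<d. x i powr (\<beta> i - 1))"

definition dleb :: "nat \<Rightarrow> (nat \<Rightarrow> real) measure" where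
  "dleb d = PiM {..<d-1} (\<lambda>_. lborel)"

definition dir_expect :: "nat \<Rightarrow> (nat \<Rightarrow> real) \<Rightarrow> ((nat \<Rightarrow> real) \<Rightarrow> real) \<Rightarrow> real" where
  "dir_expect d \<beta> h =
     (\<integral>u. indicator (dregion d) u * h (dlift d u) * dir_dens d \<beta> (dlift d u) \<partial>dleb d) /
     (\<integral>u. indicator (dregion d) u * dir_dens d \<beta> (dlift d u) \<partial>dleb d)"

definition dir_inner :: "nat \<Rightarrow> (nat \<Rightarrow> real) \<Rightarrow> ((nat \<Rightarrow> real) \<Rightarrow> real) \<Rightarrow> ((nat \<Rightarrow> real) \<Rightarrow> real) \<Rightarrow> real" where
  "dir_inner d \<beta> f g = dir_expect d \<beta> (\<lambda>x. f x * g x)"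

definition mindex_eq :: "nat \<Rightarrow> nat \<Rightarrow> (nat \<Rightarrow> nat) set" where
  "mindex_eq d m = {l. (\<forall>i. d \<le> i \<longrightarrow> l i = 0) \<and> (\<Sum>i<d. l i) = m}"

definition mindex_le :: "nat \<Rightarrow> nat \<Rightarrow> (nat \<Rightarrow> nat) set" where
  "mindex_le d n = {l. (\<forall>i. d \<le> i \<longrightarrow> l i = 0) \<and> (\<Sum>i<d. l i) \<le> n}"

definition pmono :: "nat \<Rightarrow> (nat \<Rightarrow> nat) \<Rightarrow> (nat \<Rightarrow> real) \<Rightarrow> real" where
  "pmono d l x = (\<Prod>i<d. x i ^ l i)"

definition polys :: "nat \<Rightarrow> nat \<Rightarrow> ((nat \<Rightarrow> real) \<Rightarrow> real) set" where
  "polys d n = {f. \<exists>c. f = (\<lambda>x. \<Sum>l\<in>mindex_le d n. c l * pmono d l x)}"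

definition symmetric_fun :: "nat \<Rightarrow> ((nat \<Rightarrow> real) \<Rightarrow> real) \<Rightarrow> bool" where
  "symmetric_fun d f = (\<forall>\<sigma>\<in>Sym d. \<forall>x\<in>dsimplex d. f (perm_act \<sigma> x) = f x)"

definition Vspace :: "nat \<Rightarrow> (nat \<Rightarrow> real) \<Rightarrow> nat \<Rightarrow> ((nat \<Rightarrow> real) \<Rightarrow> real) set" where
  "Vspace d \<beta> n = {f \<in> polys d n. \<forall>m<n. \<forall>g\<in>polys d m. dir_inner d \<beta> f g = 0}"

definition Vsym :: "nat \<Rightarrow> (nat \<Rightarrow> real) \<Rightarrow> nat \<Rightarrow> ((nat \<Rightarrow> real) \<Rightarrow> real) set" where
  "Vsym d \<beta> n = {f \<in> polys d n. symmetric_fun d f \<and>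
      (\<forall>m<n. \<forall>g\<in>polys d m. symmetric_fun d g \<longrightarrow> dir_inner d \<beta> f g = 0)}"

definition onb :: "nat \<Rightarrow> (nat \<Rightarrow> real) \<Rightarrow> ((nat \<Rightarrow> real) \<Rightarrow> real) set
    \<Rightarrow> nat \<Rightarrow> (nat \<Rightarrow> (nat \<Rightarrow> real) \<Rightarrow> real) \<Rightarrow> bool" where
  "onb d \<beta> V K P =
     ((\<forall>k<K. P k \<in> V) \<and>
      (\<forall>j<K. \<forall>k<K. dir_inner d \<beta> (P j) (P k) = (if j = k then 1 else 0)) \<and>
      (\<forall>f\<in>V. \<exists>c. \<forall>x\<in>dsimplex d. f x = (\<Sum>k<K. c k * P k x)))"

definition okernel :: "nat \<Rightarrow> (nat \<Rightarrow> (nat \<Rightarrow> real) \<Rightarrow> real) \<Rightarrow> (nat \<Rightarrow> real) \<Rightarrow> (nat \<Rightarrow> real) \<Rightarrow> real" where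
  "okernel K P x y = (\<Sum>k<K. P k x * P k y)"

definition symparam :: "real \<Rightarrow> nat \<Rightarrow> nat \<Rightarrow> real" where
  "symparam \<theta> d = (\<lambda>i. \<theta> / real d)"

definition a_coef :: "real \<Rightarrow> nat \<Rightarrow> nat \<Rightarrow> real" where
  "a_coef \<theta> n m = (if n = 0 \<and> m = 0 then 1 else
     (\<theta> + 2 * real n - 1) * (-1) ^ (n - m) * pochhammer (\<theta> + real m) (n - 1)
       / (fact m * fact (n - m)))"

definition multinom :: "nat \<Rightarrow> nat \<Rightarrow> (nat \<Rightarrow> nat) \<Rightarrow> real" where
  "multinom d m l = fact m / (\<Prod>i<d. fact (l i))"

definition DM :: "nat \<Rightarrow> (nat \<Rightarrow> real) \<Rightarrow> (nat \<Rightarrow> nat) \<Rightarrow> nat \<Rightarrow> real" where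
  "DM d \<beta> l m = multinom d m l * (\<Prod>i<d. pochhammer (\<beta> i) (l i)) / pochhammer (\<Sum>i<d. \<beta> i) m"

definition xi :: "real \<Rightarrow> nat \<Rightarrow> nat \<Rightarrow> (nat \<Rightarrow> real) \<Rightarrow> (nat \<Rightarrow> real) \<Rightarrow> real" where
  "xi \<theta> d m x y = (\<Sum>l\<in>mindex_eq d m.
      (multinom d m l)^2 * pmono d l x * pmono d l y / DM d (symparam \<theta> d) l m)"

end

theory Submission
  imports Defs
begin

(* Proof plan.  Write E for the expectation under the Dirichlet law D_beta and
   G_n(x,y) = sum_{m<=n} a_nm xi_m(x,y) for the explicit kernel of the paper.

   1. The normalising integral of D_beta is prod Gamma(beta_i) / Gamma(|beta|)
      (induction on the dimension, one Beta integral per step).  Hence E is a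
      linear functional on bounded measurable functions, with moments
      E(x^l) = prod (beta_i)_(l_i) / (|beta|)_(|l|).
   2. Combinatorics: the multinomial theorem weighted by falling factorials,
      the expansion of rising factorials in falling factorials, and the
      vanishing of alternating binomial sums against low-degree polynomials.
   3. For the symmetric law, the operator A_n f(x) = E_Y[G_n(x,Y) f(Y)] is
      computed on monomials: A_n(y^j) is a combination of monomials y^r, r <= j,
      whose coefficients vanish when |j| < n and equal 1 at r = j when |j| = n.
      So A_n kills lower degrees and is the identity modulo lower degrees in
      degree n; being self-adjoint, it fixes V_n, and G_n(x,.) lies in V_n.
      Hence Q_n = G_n for every orthonormal basis (reproducing kernel argument).
   4. D_theta,d is permutation invariant, so symmetrising shows that V_n^sym is
      contained in V_n, and the S_d-average of G_n reproduces V_n^sym.  The three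
      identities of the theorem then follow by averaging over S_d. *)

section \<open>The Dirichlet normalising integral\<close>

lemma dlift_measurable[measurable]: "(\<lambda>u. dlift d u i) \<in> borel_measurable (dleb d)"
proof (cases "i < d - 1")
  case True
  then have "(\<lambda>u. dlift d u i) = (\<lambda>u. u i)" by (auto simp: dlift_def)
  then show ?thesis using True unfolding dleb_def by simp
next
  case False
  then have "(\<lambda>u. dlift d u i) = (\<lambda>u. if i = d - 1 then 1 - (\<Sum>j<d-1. u j) else 0)"
    by (auto simp: dlift_def fun_eq_iff)
  then show ?thesis unfolding dleb_def by simp
qed

lemma dregion_measurable[measurable]:
  "(\<lambda>u. indicator (dregion d) u :: real) \<in> borel_measurable (dleb d)"
proof -
  have "(\<lambda>u. indicator (dregion d) u :: real)
      = (\<lambda>u. if (\<forall>i\<in>{..<d-1}. 0 \<le> u i) \<and> (\<Sum>j<d-1. u j) \<le> 1 then 1 else 0)"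
    by (auto simp: dregion_def indicator_def fun_eq_iff)
  moreover have "(\<lambda>u. if (\<forall>i\<in>{..<d-1}. 0 \<le> u i) \<and> (\<Sum>j<d-1. u j) \<le> (1::real) then 1 else (0::real))
      \<in> borel_measurable (dleb d)"
    unfolding dleb_def by measurable
  ultimately show ?thesis by simp
qed

lemma dir_dens_measurable[measurable]: "(\<lambda>u. dir_dens d \<beta> (dlift d u)) \<in> borel_measurable (dleb d)"
  unfolding dir_dens_def by measurable

lemma dir_dens_nonneg: "dir_dens d \<beta> x \<ge> 0"
  unfolding dir_dens_def by (auto intro: prod_nonneg)

lemma dlift_simplex: assumes "u \<in> dregion d" "1 \<le> d" shows "dlift d u \<in> dsimplex d"
proof -
  have "(\<Sum>i<d. dlift d u i) = (\<Sum>i<d-1. dlift d u i) + dlift d u (d-1)"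
    using assms(2) by (metis Suc_diff_1 less_le_trans sum.lessThan_Suc zero_less_one)
  also have "\<dots> = 1" by (simp add: dlift_def)
  finally have "(\<Sum>i<d. dlift d u i) = 1" .
  moreover have "\<forall>i<d. 0 \<le> dlift d u i" using assms(1) by (auto simp: dlift_def dregion_def)
  moreover have "\<forall>i. d \<le> i \<longrightarrow> dlift d u i = 0" using assms(2) by (auto simp: dlift_def)
  ultimately show ?thesis by (simp add: dsimplex_def)
qed

lemma simplex_coord_bounds: assumes "x \<in> dsimplex d" "i < d" shows "0 \<le> x i" "x i \<le> 1"
proof -
  show "0 \<le> x i" using assms by (auto simp: dsimplex_def)
  have "x i \<le> (\<Sum>j<d. x j)" using assms by (intro member_le_sum) (auto simp: dsimplex_def)
  then show "x i \<le> 1" using assms by (simp add: dsimplex_def)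
qed

text \<open>The Beta integral over [0,c]: substituting t = c s in the Beta integral on [0,1].\<close>

lemma beta_integrand_rescale:
  fixes a b c x :: real
  assumes c: "c > 0"
  shows "indicator {0..c} (c * x) * ((c * x) powr (a - 1) * (c - c * x) powr (b - 1))
       = c powr (a - 1) * c powr (b - 1) * (indicator {0..1} x * (x powr (a - 1) * (1 - x) powr (b - 1)))"
proof (cases "x \<in> {0..1}")
  case True
  then have "c * x \<in> {0..c}" using c by (auto simp: mult_left_le)
  moreover have "c - c * x = c * (1 - x)" by (simp add: algebra_simps)
  ultimately show ?thesis using True c by (simp add: powr_mult mult_ac)
next
  case False
  then have "c * x \<notin> {0..c}" using c by (auto simp: zero_le_mult_iff mult_le_cancel_left1)
  then show ?thesis using False by simp
qed

lemma beta_integral_scaled: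
  fixes a b c :: real
  assumes a: "a > 0" and b: "b > 0" and c: "c \<ge> 0"
  shows "(\<integral>\<^sup>+t. ennreal (indicator {0..c} t * (t powr (a-1) * (c-t) powr (b-1))) \<partial>lborel)
         = ennreal (c powr (a+b-1) * Beta a b)"
proof (cases "c = 0")
  case True
  have "AE t in lborel. ennreal (indicator {0..c} t * (t powr (a-1) * (c-t) powr (b-1))) = 0"
    using AE_lborel_singleton[of 0] by eventually_elim (auto simp: True indicator_def)
  then have "(\<integral>\<^sup>+t. ennreal (indicator {0..c} t * (t powr (a-1) * (c-t) powr (b-1))) \<partial>lborel) = 0"
    using nn_integral_cong_AE by fastforce
  then show ?thesis using True by simp
next
  case False
  with c have cp: "c > 0" by simp
  have Beta: "(\<integral>\<^sup>+x. ennreal (indicator {0..1} x * (x powr (a - 1) * (1 - x) powr (b - 1))) \<partial>lborel)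
      = ennreal (Beta a b)"
    using nn_integral_has_integral_lebesgue[OF _ has_integral_Beta_real[OF a b]] by simp
  have Beta_nonneg: "Beta a b \<ge> 0" using a b by (simp add: Beta_def Gamma_real_pos less_imp_le)
  have powr_split: "c powr (a+b-1) = c * (c powr (a-1) * c powr (b-1))"
    using cp by (simp add: powr_add[symmetric] powr_mult_base)
  have "(\<integral>\<^sup>+t. ennreal (indicator {0..c} t * (t powr (a-1) * (c-t) powr (b-1))) \<partial>lborel)
     = ennreal \<bar>c\<bar> * (\<integral>\<^sup>+x. ennreal (indicator {0..c} (0 + c*x) * ((0 + c*x) powr (a-1) * (c-(0 + c*x)) powr (b-1))) \<partial>lborel)"
    by (rule nn_integral_real_affine) (use cp in auto)
  also have "\<dots> = ennreal c * (\<integral>\<^sup>+x. ennreal (c powr (a - 1) * c powr (b - 1))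
        * ennreal (indicator {0..1} x * (x powr (a - 1) * (1 - x) powr (b - 1))) \<partial>lborel)"
    using cp by (simp add: beta_integrand_rescale ennreal_mult[symmetric] mult.assoc)
  also have "\<dots> = ennreal c * (ennreal (c powr (a - 1) * c powr (b - 1)) * ennreal (Beta a b))"
    by (subst nn_integral_cmult) (auto simp: Beta)
  also have "\<dots> = ennreal (c powr (a+b-1) * Beta a b)"
    using cp Beta_nonneg by (simp add: powr_split ennreal_mult[symmetric] mult.assoc)
  finally show ?thesis .
qed

definition dir_integral :: "nat \<Rightarrow> (nat \<Rightarrow> real) \<Rightarrow> ennreal" where
  "dir_integral d \<beta> = (\<integral>\<^sup>+u. ennreal (indicator (dregion d) u * dir_dens d \<beta> (dlift d u)) \<partial>dleb d)"

lemma dir_integral_dim1: "dir_integral (Suc 0) \<beta> = 1"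
proof -
  have "\<And>u. indicator (dregion (Suc 0)) u * dir_dens (Suc 0) \<beta> (dlift (Suc 0) u) = (1::real)"
    by (simp add: dregion_def dir_dens_def dlift_def)
  then show ?thesis unfolding dir_integral_def dleb_def by (simp add: PiM_empty)
qed

lemma dir_integrand_fibre:
  fixes x \<beta> :: "nat \<Rightarrow> real" and k :: nat and t :: real
  defines "s \<equiv> (\<Sum>j<k. x j)"
    and "P0 \<equiv> (if \<forall>i<k. 0 \<le> x i then 1 else 0) * (\<Prod>i<k. x i powr (\<beta> i - 1))"
  shows "indicator (dregion (Suc (Suc k))) (x(k := t)) * dir_dens (Suc (Suc k)) \<beta> (dlift (Suc (Suc k)) (x(k := t)))
       = P0 * (indicator {0..1-s} t * (t powr (\<beta> k - 1) * ((1-s)-t) powr (\<beta> (Suc k) - 1)))"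
proof -
  have sum1: "(\<Sum>j<Suc k. (x(k := t)) j) = s + t" by (simp add: s_def)
  have reg: "(x(k := t) \<in> dregion (Suc (Suc k))) = ((\<forall>i<k. 0 \<le> x i) \<and> t \<in> {0..1-s})"
    by (auto simp: dregion_def sum1 less_Suc_eq s_def)
  have "dir_dens (Suc (Suc k)) \<beta> (dlift (Suc (Suc k)) (x(k := t)))
      = (\<Prod>i<k. x i powr (\<beta> i - 1)) * (t powr (\<beta> k - 1) * ((1-s)-t) powr (\<beta> (Suc k) - 1))"
    by (simp add: dir_dens_def dlift_def sum1 algebra_simps s_def)
  then show ?thesis by (simp add: reg P0_def indicator_def)
qed

lemma dir_integral_fibre:
  assumes a: "\<beta> k > 0" and b: "\<beta> (Suc k) > 0"
  shows "(\<integral>\<^sup>+t. ennreal (indicator (dregion (Suc (Suc k))) (x(k := t))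
             * dir_dens (Suc (Suc k)) \<beta> (dlift (Suc (Suc k)) (x(k := t)))) \<partial>lborel)
       = ennreal (Beta (\<beta> k) (\<beta> (Suc k)))
         * ennreal (indicator (dregion (Suc k)) x
             * dir_dens (Suc k) (\<beta>(k := \<beta> k + \<beta> (Suc k))) (dlift (Suc k) x))"
    (is "?lhs = _")
proof -
  define s where "s = (\<Sum>j<k. x j)"
  define P0 where "P0 = (if \<forall>i<k. 0 \<le> x i then 1 else 0) * (\<Prod>i<k. x i powr (\<beta> i - 1))"
  have P0: "P0 \<ge> 0" unfolding P0_def by (auto intro!: prod_nonneg)
  have Beta_nonneg: "Beta (\<beta> k) (\<beta> (Suc k)) \<ge> 0"
    using a b by (simp add: Beta_def Gamma_real_pos less_imp_le)
  have integrand: "ennreal (indicator (dregion (Suc (Suc k))) (x(k := t))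
             * dir_dens (Suc (Suc k)) \<beta> (dlift (Suc (Suc k)) (x(k := t))))
      = ennreal P0 * ennreal (indicator {0..1-s} t * (t powr (\<beta> k - 1) * ((1-s)-t) powr (\<beta> (Suc k) - 1)))"
    for t
    unfolding dir_integrand_fibre s_def[symmetric] P0_def[symmetric] using P0
    by (intro ennreal_mult) auto
  have "?lhs = ennreal P0 * (\<integral>\<^sup>+ t. ennreal (indicator {0..1-s} t
                 * (t powr (\<beta> k - 1) * ((1-s)-t) powr (\<beta> (Suc k) - 1))) \<partial>lborel)"
    unfolding integrand by (rule nn_integral_cmult) measurable
  also have "\<dots> = ennreal (Beta (\<beta> k) (\<beta> (Suc k)))
         * ennreal (indicator (dregion (Suc k)) x
             * dir_dens (Suc k) (\<beta>(k := \<beta> k + \<beta> (Suc k))) (dlift (Suc k) x))"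
  proof (cases "s \<le> 1")
    case True
    have reg: "(x \<in> dregion (Suc k)) = (\<forall>i<k. 0 \<le> x i)" using True by (simp add: dregion_def s_def)
    have dens: "dir_dens (Suc k) (\<beta>(k := \<beta> k + \<beta> (Suc k))) (dlift (Suc k) x)
        = (\<Prod>i<k. x i powr (\<beta> i - 1)) * (1 - s) powr (\<beta> k + \<beta> (Suc k) - 1)"
      by (simp add: dir_dens_def dlift_def s_def)
    have "(\<integral>\<^sup>+ t. ennreal (indicator {0..1-s} t
                 * (t powr (\<beta> k - 1) * ((1-s)-t) powr (\<beta> (Suc k) - 1))) \<partial>lborel)
        = ennreal ((1-s) powr (\<beta> k + \<beta> (Suc k) - 1) * Beta (\<beta> k) (\<beta> (Suc k)))"
      by (rule beta_integral_scaled[OF a b]) (use True in simp)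
    then show ?thesis
      using P0 Beta_nonneg
      by (auto simp: dens P0_def ennreal_mult[symmetric] mult_ac indicator_def reg)
  next
    case False
    then have "x \<notin> dregion (Suc k)" by (simp add: dregion_def s_def)
    then show ?thesis using False by simp
  qed
  finally show ?thesis .
qed

lemma dir_integral_step:
  assumes a: "\<beta> k > 0" and b: "\<beta> (Suc k) > 0"
  shows "dir_integral (Suc (Suc k)) \<beta>
       = ennreal (Beta (\<beta> k) (\<beta> (Suc k))) * dir_integral (Suc k) (\<beta>(k := \<beta> k + \<beta> (Suc k)))"
proof -
  interpret product_sigma_finite "\<lambda>_. lborel" by standard
  define \<beta>' where "\<beta>' = \<beta>(k := \<beta> k + \<beta> (Suc k))"
  define F where "F u = ennreal (indicator (dregion (Suc (Suc k))) u
                          * dir_dens (Suc (Suc k)) \<beta> (dlift (Suc (Suc k)) u))" for u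
  define G where "G x = ennreal (indicator (dregion (Suc k)) x * dir_dens (Suc k) \<beta>' (dlift (Suc k) x))" for x
  have lebesgue_split: "dleb (Suc (Suc k)) = Pi\<^sub>M (insert k {..<k}) (\<lambda>_. lborel)"
    by (simp add: dleb_def lessThan_Suc)
  have F_meas: "F \<in> borel_measurable (Pi\<^sub>M (insert k {..<k}) (\<lambda>_. lborel))"
    unfolding F_def lebesgue_split[symmetric] by measurable
  have "G \<in> borel_measurable (dleb (Suc k))" unfolding G_def \<beta>'_def by measurable
  then have G_meas: "G \<in> borel_measurable (Pi\<^sub>M {..<k} (\<lambda>_. lborel))" by (simp add: dleb_def)
  have "dir_integral (Suc (Suc k)) \<beta>
      = (\<integral>\<^sup>+ x. (\<integral>\<^sup>+ t. F (x(k := t)) \<partial>lborel) \<partial>(Pi\<^sub>M {..<k} (\<lambda>_. lborel)))"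
    unfolding dir_integral_def F_def[symmetric] lebesgue_split
    by (rule product_nn_integral_insert) (auto simp: F_meas)
  also have "\<dots> = (\<integral>\<^sup>+ x. ennreal (Beta (\<beta> k) (\<beta> (Suc k))) * G x \<partial>(Pi\<^sub>M {..<k} (\<lambda>_. lborel)))"
    unfolding F_def G_def \<beta>'_def by (simp add: dir_integral_fibre[OF a b])
  also have "\<dots> = ennreal (Beta (\<beta> k) (\<beta> (Suc k))) * dir_integral (Suc k) \<beta>'"
    unfolding dir_integral_def G_def[symmetric] using G_meas
    by (subst nn_integral_cmult) (simp_all add: dleb_def)
  finally show ?thesis unfolding \<beta>'_def .
qed

lemma dir_integral_Gamma:
  assumes "\<forall>i<Suc k. 0 < \<beta> i"
  shows "dir_integral (Suc k) \<beta> = ennreal ((\<Prod>i<Suc k. Gamma (\<beta> i)) / Gamma (\<Sum>i<Suc k. \<beta> i))"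
  using assms
proof (induction k arbitrary: \<beta>)
  case 0
  then have "Gamma (\<beta> 0) > 0" by (intro Gamma_real_pos) simp
  then show ?case by (simp add: dir_integral_dim1)
next
  case (Suc k)
  define \<beta>' where "\<beta>' = \<beta>(k := \<beta> k + \<beta> (Suc k))"
  have a: "\<beta> k > 0" and b: "\<beta> (Suc k) > 0" using Suc.prems by auto
  have pos': "\<forall>i<Suc k. 0 < \<beta>' i" using Suc.prems add_pos_pos[OF a b] by (auto simp: \<beta>'_def)
  have Beta_nonneg: "Beta (\<beta> k) (\<beta> (Suc k)) \<ge> 0"
    using a b by (simp add: Beta_def Gamma_real_pos less_imp_le)
  have Gamma_prod_nonneg: "(\<Prod>i<Suc k. Gamma (\<beta>' i)) / Gamma (\<Sum>i<Suc k. \<beta>' i) \<ge> 0"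
  proof (rule divide_nonneg_pos)
    show "(\<Prod>i<Suc k. Gamma (\<beta>' i)) \<ge> 0"
      by (rule prod_nonneg) (use pos' Gamma_real_pos less_imp_le in fastforce)
    show "Gamma (\<Sum>i<Suc k. \<beta>' i) > 0"
      using pos' by (intro Gamma_real_pos sum_pos) auto
  qed
  have Gamma_merge: "Beta (\<beta> k) (\<beta> (Suc k)) * ((\<Prod>i<Suc k. Gamma (\<beta>' i)) / Gamma (\<Sum>i<Suc k. \<beta>' i))
      = (\<Prod>i<Suc (Suc k). Gamma (\<beta> i)) / Gamma (\<Sum>i<Suc (Suc k). \<beta> i)"
  proof -
    have "Gamma (\<beta> k + \<beta> (Suc k)) > 0" using a b by (intro Gamma_real_pos) simp
    then show ?thesis by (simp add: \<beta>'_def Beta_def field_simps)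
  qed
  have "dir_integral (Suc (Suc k)) \<beta> = ennreal (Beta (\<beta> k) (\<beta> (Suc k))) * dir_integral (Suc k) \<beta>'"
    unfolding \<beta>'_def by (rule dir_integral_step[OF a b])
  also have "\<dots> = ennreal (Beta (\<beta> k) (\<beta> (Suc k)))
      * ennreal ((\<Prod>i<Suc k. Gamma (\<beta>' i)) / Gamma (\<Sum>i<Suc k. \<beta>' i))"
    using Suc.IH[OF pos'] by simp
  also have "\<dots> = ennreal ((\<Prod>i<Suc (Suc k). Gamma (\<beta> i)) / Gamma (\<Sum>i<Suc (Suc k). \<beta> i))"
    by (simp only: ennreal_mult[OF Beta_nonneg Gamma_prod_nonneg, symmetric] Gamma_merge)
  finally show ?case .
qed

section \<open>Expectations under the Dirichlet law\<close>

definition dir_const :: "nat \<Rightarrow> (nat \<Rightarrow> real) \<Rightarrow> real" where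
  "dir_const d \<beta> = (\<Prod>i<d. Gamma (\<beta> i)) / Gamma (\<Sum>i<d. \<beta> i)"

definition bdd_meas :: "nat \<Rightarrow> ((nat \<Rightarrow> real) \<Rightarrow> real) \<Rightarrow> bool" where
  "bdd_meas d h = ((\<lambda>u. h (dlift d u)) \<in> borel_measurable (dleb d) \<and> (\<exists>C. \<forall>x\<in>dsimplex d. \<bar>h x\<bar> \<le> C))"

lemma bdd_meas_const: "bdd_meas d (\<lambda>x. c)"
  unfolding bdd_meas_def by auto

lemma bdd_meas_pmono: "bdd_meas d (pmono d l)"
proof -
  have "(\<lambda>u. pmono d l (dlift d u)) \<in> borel_measurable (dleb d)"
    unfolding pmono_def by measurable
  moreover have "\<bar>pmono d l x\<bar> \<le> 1" if x: "x \<in> dsimplex d" for x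
    using simplex_coord_bounds[OF x] unfolding pmono_def
    by (auto simp: abs_prod intro!: prod_le_1 power_le_one)
  ultimately show ?thesis unfolding bdd_meas_def by blast
qed

lemma bdd_meas_add: assumes "bdd_meas d f" "bdd_meas d g" shows "bdd_meas d (\<lambda>x. f x + g x)"
proof -
  obtain C1 C2 where "\<forall>x\<in>dsimplex d. \<bar>f x\<bar> \<le> C1" "\<forall>x\<in>dsimplex d. \<bar>g x\<bar> \<le> C2"
    and "(\<lambda>u. f (dlift d u)) \<in> borel_measurable (dleb d)" "(\<lambda>u. g (dlift d u)) \<in> borel_measurable (dleb d)"
    using assms by (auto simp: bdd_meas_def)
  then show ?thesis unfolding bdd_meas_def
    by (intro conjI exI[of _ "C1 + C2"] ballI borel_measurable_add)
      (auto intro: order_trans[OF abs_triangle_ineq add_mono])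
qed

lemma bdd_meas_mult: assumes "bdd_meas d f" "bdd_meas d g" shows "bdd_meas d (\<lambda>x. f x * g x)"
proof -
  obtain C1 C2 where "\<forall>x\<in>dsimplex d. \<bar>f x\<bar> \<le> C1" "\<forall>x\<in>dsimplex d. \<bar>g x\<bar> \<le> C2"
    and "(\<lambda>u. f (dlift d u)) \<in> borel_measurable (dleb d)" "(\<lambda>u. g (dlift d u)) \<in> borel_measurable (dleb d)"
    using assms by (auto simp: bdd_meas_def)
  then show ?thesis unfolding bdd_meas_def
    by (intro conjI exI[of _ "C1 * C2"] ballI borel_measurable_times)
      (auto simp: abs_mult intro: mult_mono')
qed

lemma bdd_meas_sum:
  "finite I \<Longrightarrow> (\<And>i. i \<in> I \<Longrightarrow> bdd_meas d (f i)) \<Longrightarrow> bdd_meas d (\<lambda>x. \<Sum>i\<in>I. f i x)"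
  by (induction I rule: finite_induct) (simp_all add: bdd_meas_const bdd_meas_add)

lemma bdd_meas_cmult: "bdd_meas d f \<Longrightarrow> bdd_meas d (\<lambda>x. c * f x)"
  using bdd_meas_mult[OF bdd_meas_const] .

lemma bdd_meas_diff: "bdd_meas d f \<Longrightarrow> bdd_meas d g \<Longrightarrow> bdd_meas d (\<lambda>x. f x - g x)"
  using bdd_meas_add[of d f "\<lambda>x. (-1) * g x"] bdd_meas_cmult[of d g "-1"] by simp

locale dirichlet =
  fixes d :: nat and \<beta> :: "nat \<Rightarrow> real"
  assumes pos: "\<forall>i<d. 0 < \<beta> i" and d1: "1 \<le> d"
begin

abbreviation E where "E h \<equiv> dir_expect d \<beta> h"

lemma coords_nonempty: "{..<d} \<noteq> {}"
  using d1 by (metis lessThan_empty_iff not_one_le_zero)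

lemma dir_const_pos: "dir_const d \<beta> > 0"
proof -
  have "(\<Prod>i<d. Gamma (\<beta> i)) > 0" using pos by (auto intro!: prod_pos Gamma_real_pos)
  moreover have "Gamma (\<Sum>i<d. \<beta> i) > 0"
    using pos coords_nonempty by (intro Gamma_real_pos sum_pos) auto
  ultimately show ?thesis by (simp add: dir_const_def)
qed

lemma dir_integral_eq: "dir_integral d \<beta> = ennreal (dir_const d \<beta>)"
proof -
  obtain k where k: "d = Suc k" using d1 by (metis Suc_diff_1 less_le_trans zero_less_one)
  show ?thesis using dir_integral_Gamma[of k \<beta>] pos by (simp add: k dir_const_def)
qed

lemma integrable_dens:
  "integrable (dleb d) (\<lambda>u. indicator (dregion d) u * dir_dens d \<beta> (dlift d u))"
  by (rule integrableI_nonneg) (use dir_integral_eq in \<open>auto simp: dir_integral_def dir_dens_nonneg\<close>)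

lemma integral_dens: "(\<integral>u. indicator (dregion d) u * dir_dens d \<beta> (dlift d u) \<partial>dleb d) = dir_const d \<beta>"
proof -
  have "(\<integral>u. indicator (dregion d) u * dir_dens d \<beta> (dlift d u) \<partial>dleb d) = enn2real (dir_integral d \<beta>)"
    unfolding dir_integral_def by (rule integral_eq_nn_integral) (auto simp: dir_dens_nonneg)
  then show ?thesis using dir_integral_eq dir_const_pos by simp
qed

lemma integrable_bdd_meas: assumes "bdd_meas d h"
  shows "integrable (dleb d) (\<lambda>u. indicator (dregion d) u * h (dlift d u) * dir_dens d \<beta> (dlift d u))"
proof -
  obtain C where C: "\<forall>x\<in>dsimplex d. \<bar>h x\<bar> \<le> C"
    and hm: "(\<lambda>u. h (dlift d u)) \<in> borel_measurable (dleb d)"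
    using assms by (auto simp: bdd_meas_def)
  have bound: "norm (indicator (dregion d) u * h (dlift d u) * dir_dens d \<beta> (dlift d u))
        \<le> norm (C * (indicator (dregion d) u * dir_dens d \<beta> (dlift d u)))" for u
  proof (cases "u \<in> dregion d")
    case True
    then have "\<bar>h (dlift d u)\<bar> \<le> C" using C dlift_simplex[OF True d1] by auto
    then show ?thesis using True dir_dens_nonneg[of d \<beta> "dlift d u"]
      by (auto simp: abs_mult intro!: mult_right_mono)
  qed simp
  show ?thesis
    by (rule Bochner_Integration.integrable_bound[where f = "\<lambda>u. C * (indicator (dregion d) u * dir_dens d \<beta> (dlift d u))"])
      (use integrable_dens hm bound in auto)
qed

lemma E_alt: "E h = (\<integral>u. indicator (dregion d) u * h (dlift d u) * dir_dens d \<beta> (dlift d u) \<partial>dleb d)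
                    / dir_const d \<beta>"
  unfolding dir_expect_def integral_dens ..

lemma E_cmult: "E (\<lambda>x. c * f x) = c * E f"
  unfolding E_alt by (simp add: mult_ac)

lemma E_sum: assumes "finite I" "\<And>i. i \<in> I \<Longrightarrow> bdd_meas d (f i)"
  shows "E (\<lambda>x. \<Sum>i\<in>I. f i x) = (\<Sum>i\<in>I. E (f i))"
proof -
  have "(\<lambda>u. indicator (dregion d) u * (\<Sum>i\<in>I. f i (dlift d u)) * dir_dens d \<beta> (dlift d u))
      = (\<lambda>u. \<Sum>i\<in>I. indicator (dregion d) u * f i (dlift d u) * dir_dens d \<beta> (dlift d u))"
    by (simp add: sum_distrib_left sum_distrib_right)
  then show ?thesis unfolding E_alt
    by (simp add: integral_sum integrable_bdd_meas[OF assms(2)] sum_divide_distrib)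
qed

lemma E_diff: assumes "bdd_meas d f" "bdd_meas d g" shows "E (\<lambda>x. f x - g x) = E f - E g"
proof -
  have "(\<lambda>u. indicator (dregion d) u * (f (dlift d u) - g (dlift d u)) * dir_dens d \<beta> (dlift d u))
      = (\<lambda>u. indicator (dregion d) u * f (dlift d u) * dir_dens d \<beta> (dlift d u)
           - indicator (dregion d) u * g (dlift d u) * dir_dens d \<beta> (dlift d u))"
    by (simp add: algebra_simps)
  then show ?thesis unfolding E_alt
    by (simp add: integrable_bdd_meas assms diff_divide_distrib)
qed

lemma E_cong: assumes "\<And>x. x \<in> dsimplex d \<Longrightarrow> f x = g x" shows "E f = E g"
proof -
  have "(\<lambda>u. indicator (dregion d) u * f (dlift d u) * dir_dens d \<beta> (dlift d u))
      = (\<lambda>u. indicator (dregion d) u * g (dlift d u) * dir_dens d \<beta> (dlift d u))"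
    using assms dlift_simplex[OF _ d1] by (auto simp: indicator_def fun_eq_iff)
  then show ?thesis unfolding E_alt by simp
qed

lemma E_zero: "E (\<lambda>x. 0) = 0"
  using E_cmult[of 0 "\<lambda>x. 0"] by simp

lemma pow_mult_powr: assumes "(x::real) \<ge> 0" shows "x ^ n * x powr (b - 1) = x powr (b + real n - 1)"
proof (cases "x = 0")
  case False
  then have "x ^ n * x powr (b - 1) = x powr (real n + (b - 1))"
    using assms by (simp add: powr_realpow[symmetric] powr_add[symmetric])
  also have "real n + (b - 1) = b + real n - 1" by simp
  finally show ?thesis .
qed simp

lemma pmono_dens: assumes x: "x \<in> dsimplex d"
  shows "pmono d l x * dir_dens d \<beta> x = dir_dens d (\<lambda>i. \<beta> i + real (l i)) x"
  unfolding pmono_def dir_dens_def prod.distrib[symmetric]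
proof (rule prod.cong[OF refl])
  fix i assume "i \<in> {..<d}"
  then show "x i ^ l i * x i powr (\<beta> i - 1) = x i powr (\<beta> i + real (l i) - 1)"
    using simplex_coord_bounds[OF x] by (simp add: pow_mult_powr)
qed

lemma Gamma_shift: assumes "(z::real) > 0" shows "Gamma (z + real n) = pochhammer z n * Gamma z"
proof -
  have "z \<notin> \<int>\<^sub>\<le>\<^sub>0" using assms nonpos_Ints_nonpos by force
  then show ?thesis using pochhammer_Gamma[of z n] Gamma_real_pos[OF assms] by simp
qed

lemma E_pmono:
  "E (pmono d l) = (\<Prod>i<d. pochhammer (\<beta> i) (l i)) / pochhammer (\<Sum>i<d. \<beta> i) (\<Sum>i<d. l i)"
proof -
  define \<gamma> where "\<gamma> i = \<beta> i + real (l i)" for i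
  interpret shifted: dirichlet d \<gamma>
    using pos d1 by unfold_locales (auto simp: \<gamma>_def add_pos_nonneg)
  have "(\<lambda>u. indicator (dregion d) u * pmono d l (dlift d u) * dir_dens d \<beta> (dlift d u))
      = (\<lambda>u. indicator (dregion d) u * dir_dens d \<gamma> (dlift d u))"
    using pmono_dens[OF dlift_simplex[OF _ d1]] by (auto simp: \<gamma>_def[abs_def] indicator_def fun_eq_iff)
  then have "E (pmono d l) = dir_const d \<gamma> / dir_const d \<beta>"
    unfolding E_alt using shifted.integral_dens by simp
  also have "\<dots> = (\<Prod>i<d. pochhammer (\<beta> i) (l i)) / pochhammer (\<Sum>i<d. \<beta> i) (\<Sum>i<d. l i)"
  proof -
    have sum_pos: "(\<Sum>i<d. \<beta> i) > 0" using pos coords_nonempty by (intro sum_pos) auto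
    have num: "(\<Prod>i<d. Gamma (\<gamma> i)) = (\<Prod>i<d. pochhammer (\<beta> i) (l i)) * (\<Prod>i<d. Gamma (\<beta> i))"
      by (simp add: \<gamma>_def prod.distrib[symmetric] Gamma_shift pos)
    have den: "Gamma (\<Sum>i<d. \<gamma> i)
        = pochhammer (\<Sum>i<d. \<beta> i) (\<Sum>i<d. l i) * Gamma (\<Sum>i<d. \<beta> i)"
      using Gamma_shift[OF sum_pos, of "\<Sum>i<d. l i"] by (simp add: \<gamma>_def sum.distrib)
    have cancel: "\<And>A B C D. (A::real) > 0 \<Longrightarrow> C > 0 \<Longrightarrow> D > 0 \<Longrightarrow> (B * A) / (D * C) / (A / C) = B / D"
      by (simp add: field_simps)
    show ?thesis unfolding dir_const_def num den
    proof (rule cancel)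
      show "(\<Prod>i<d. Gamma (\<beta> i)) > 0" using pos by (auto intro!: prod_pos Gamma_real_pos)
      show "Gamma (\<Sum>i<d. \<beta> i) > 0" using sum_pos by (rule Gamma_real_pos)
      show "pochhammer (\<Sum>i<d. \<beta> i) (\<Sum>i<d. l i) > 0" using sum_pos by (rule pochhammer_pos)
    qed
  qed
  finally show ?thesis .
qed

end

section \<open>Multi-indices and the multinomial theorem\<close>

definition mbox :: "nat \<Rightarrow> (nat \<Rightarrow> nat) \<Rightarrow> (nat \<Rightarrow> nat) set" where
  "mbox d j = {r. (\<forall>i<d. r i \<le> j i) \<and> (\<forall>i. d \<le> i \<longrightarrow> r i = 0)}"

lemma bij_mbox_PiE:
  "bij_betw (\<lambda>g i. if i < d then g i else 0) (PiE {..<d} (\<lambda>i. {..j i})) (mbox d j)"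
  by (rule bij_betwI[where g = "\<lambda>r. restrict r {..<d}"])
    (auto simp: mbox_def PiE_def Pi_def restrict_def extensional_def fun_eq_iff)

lemma finite_mbox: "finite (mbox d j)"
  using bij_betw_finite[OF bij_mbox_PiE] by (auto intro!: finite_PiE)

lemma prod_sum_mbox:
  fixes f :: "nat \<Rightarrow> nat \<Rightarrow> 'c::comm_semiring_1"
  shows "(\<Prod>i<d. \<Sum>t\<le>j i. f i t) = (\<Sum>r\<in>mbox d j. \<Prod>i<d. f i (r i))"
proof -
  have "(\<Prod>i<d. \<Sum>t\<le>j i. f i t) = (\<Sum>g\<in>PiE {..<d} (\<lambda>i. {..j i}). \<Prod>i<d. f i (g i))"
    by (rule prod_sum_PiE) auto
  also have "\<dots> = (\<Sum>g\<in>PiE {..<d} (\<lambda>i. {..j i}). \<Prod>i<d. f i (if i < d then g i else 0))"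
    by (intro sum.cong prod.cong) auto
  also have "\<dots> = (\<Sum>r\<in>mbox d j. \<Prod>i<d. f i (r i))"
    using sum.reindex_bij_betw[OF bij_mbox_PiE, of "\<lambda>r. \<Prod>i<d. f i (r i)" d j] by simp
  finally show ?thesis .
qed

lemma mbox_sum_le: "r \<in> mbox d j \<Longrightarrow> (\<Sum>i<d. r i) \<le> (\<Sum>i<d. j i)"
  by (intro sum_mono) (auto simp: mbox_def)

lemma mbox_self: "j \<in> mindex_le d N \<Longrightarrow> j \<in> mbox d j"
  by (auto simp: mbox_def mindex_le_def)

lemma mbox_proper_degree: assumes j: "j \<in> mindex_le d N" and r: "r \<in> mbox d j - {j}"
  shows "(\<Sum>i<d. r i) < (\<Sum>i<d. j i)"
proof -
  obtain i where i: "r i \<noteq> j i" using r by (auto simp: fun_eq_iff)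
  then have "i < d" using j r by (auto simp: mbox_def mindex_le_def) (metis not_le)?
  then show ?thesis
    by (intro sum_strict_mono_ex1) (use r i in \<open>auto simp: mbox_def intro!: bexI[of _ i]\<close>)
qed

lemma mindex_le_subset_mbox: "mindex_le d n \<subseteq> mbox d (\<lambda>_. n)"
proof
  fix l assume l: "l \<in> mindex_le d n"
  have "l i \<le> n" if "i < d" for i
    using l member_le_sum[of i "{..<d}" l] that by (auto simp: mindex_le_def)
  then show "l \<in> mbox d (\<lambda>_. n)" using l by (auto simp: mindex_le_def mbox_def)
qed

lemma finite_mindex_le: "finite (mindex_le d n)"
  using finite_subset[OF mindex_le_subset_mbox finite_mbox] .

lemma mindex_eq_subset_le: "m \<le> n \<Longrightarrow> mindex_eq d m \<subseteq> mindex_le d n"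
  by (auto simp: mindex_eq_def mindex_le_def)

lemma finite_mindex_eq: "finite (mindex_eq d m)"
  using finite_subset[OF mindex_eq_subset_le[of m m] finite_mindex_le] by simp

lemma mindex_le_degree: "j \<in> mindex_le d N \<Longrightarrow> j \<in> mindex_eq d (\<Sum>i<d. j i)"
  by (auto simp: mindex_le_def mindex_eq_def)

lemma sum_mindex_eq_Suc:
  "(\<Sum>l\<in>mindex_eq (Suc d) m. F l) = (\<Sum>t\<le>m. \<Sum>l\<in>mindex_eq d (m-t). F (l(d:=t)))"
proof -
  have "(\<Sum>t\<le>m. \<Sum>l\<in>mindex_eq d (m-t). F (l(d:=t)))
      = (\<Sum>p\<in>Sigma {..m} (\<lambda>t. mindex_eq d (m-t)). F ((snd p)(d := fst p)))"
    by (subst sum.Sigma) (auto simp: finite_mindex_eq split_def)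
  also have "\<dots> = (\<Sum>l\<in>mindex_eq (Suc d) m. F l)"
  proof (rule sum.reindex_bij_witness[where i = "\<lambda>l. (l d, l(d := 0))" and j = "\<lambda>p. (snd p)(d := fst p)"])
    fix a assume a: "a \<in> Sigma {..m} (\<lambda>t. mindex_eq d (m-t))"
    then show "(((snd a)(d := fst a)) d, ((snd a)(d := fst a))(d := 0)) = a"
      by (cases a) (auto simp: mindex_eq_def fun_eq_iff)
    show "(snd a)(d := fst a) \<in> mindex_eq (Suc d) m"
      using a by (auto simp: mindex_eq_def sum.lessThan_Suc)
  next
    fix b assume b: "b \<in> mindex_eq (Suc d) m"
    have "(\<Sum>i<Suc d. b i) = (\<Sum>i<d. b i) + b d" by (simp add: sum.lessThan_Suc)
    then show "(b d, b(d := 0)) \<in> Sigma {..m} (\<lambda>t. mindex_eq d (m-t))"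
      using b by (auto simp: mindex_eq_def)
  qed simp_all
  finally show ?thesis by simp
qed

lemma multinomial_thm:
  "(\<Sum>l\<in>mindex_eq d m. multinom d m l * pmono d l x) = (\<Sum>i<d. x i) ^ m"
proof (induction d arbitrary: m)
  case 0
  have "mindex_eq 0 m = (if m = 0 then {\<lambda>_. 0} else {})" by (auto simp: mindex_eq_def fun_eq_iff)
  then show ?case by (simp add: multinom_def pmono_def)
next
  case (Suc d)
  have split_last: "multinom (Suc d) m (l(d:=t)) * pmono (Suc d) (l(d:=t)) x
      = (of_nat (m choose t) * x d ^ t) * (multinom d (m-t) l * pmono d l x)"
    if t: "t \<le> m" for t l
  proof -
    have "(\<Prod>i<d. fact ((l(d:=t)) i)) = (\<Prod>i<d. fact (l i) :: real)"
      "(\<Prod>i<d. x i ^ (l(d:=t)) i) = (\<Prod>i<d. x i ^ l i)" by (auto intro: prod.cong)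
    then show ?thesis
      using t by (simp add: multinom_def pmono_def prod.lessThan_Suc binomial_fact field_simps)
  qed
  have "(\<Sum>l\<in>mindex_eq (Suc d) m. multinom (Suc d) m l * pmono (Suc d) l x)
      = (\<Sum>t\<le>m. of_nat (m choose t) * x d ^ t * (\<Sum>l\<in>mindex_eq d (m-t). multinom d (m-t) l * pmono d l x))"
    unfolding sum_mindex_eq_Suc by (simp add: split_last sum_distrib_left)
  also have "\<dots> = (x d + (\<Sum>i<d. x i)) ^ m" by (simp add: Suc.IH binomial_ring)
  finally show ?case by (simp add: add.commute)
qed

definition falling :: "nat \<Rightarrow> nat \<Rightarrow> real" where
  "falling l r = (if r \<le> l then fact l / fact (l - r) else 0)"

lemma falling_multinom_shift:
  assumes "R = (\<Sum>i<d. r i)" "R \<le> m"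
  shows "multinom d m (\<lambda>i. a i + r i) * (\<Prod>i<d. falling (a i + r i) (r i))
       = falling m R * multinom d (m - R) a"
proof -
  have "(\<Prod>i<d. falling (a i + r i) (r i)) = (\<Prod>i<d. fact (a i + r i) / fact (a i))"
    by (intro prod.cong) (auto simp: falling_def)
  moreover have "(\<Prod>i<d. fact (a i + r i) :: real) > 0" "(\<Prod>i<d. fact (a i) :: real) > 0"
    by (auto intro: prod_pos)
  ultimately show ?thesis
    using assms by (simp add: multinom_def falling_def prod_dividef)
qed

text \<open>Only multi-indices l >= r contribute to the falling-factorial weighted sum; shifting
  them by r reduces it to a plain multinomial sum of degree m - |r|.\<close>

lemma falling_multinomial_shift:
  assumes R: "R = (\<Sum>i<d. r i)" "R \<le> m"
  shows "(\<Sum>a\<in>mindex_eq d (m - R). falling m R * pmono d r x * (multinom d (m - R) a * pmono d a x))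
       = (\<Sum>l\<in>{l \<in> mindex_eq d m. \<forall>i<d. r i \<le> l i}. multinom d m l * (\<Prod>i<d. falling (l i) (r i)) * pmono d l x)"
proof (rule sum.reindex_bij_witness[where i = "\<lambda>l i. l i - r i" and j = "\<lambda>a i. a i + (if i < d then r i else 0)"])
  fix a assume a: "a \<in> mindex_eq d (m - R)"
  define r0 where "r0 i = (if i < d then r i else 0)" for i
  show "(\<lambda>i. a i + (if i < d then r i else 0) - r i) = a"
    using a by (auto simp: fun_eq_iff mindex_eq_def)
  have "(\<Sum>i<d. a i + r0 i) = (\<Sum>i<d. a i) + R" by (simp add: sum.distrib R(1) r0_def)
  then show "(\<lambda>i. a i + (if i < d then r i else 0)) \<in> {l \<in> mindex_eq d m. \<forall>i<d. r i \<le> l i}"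
    using a R(2) by (auto simp: mindex_eq_def r0_def)
  have "multinom d m (\<lambda>i. a i + r0 i) * (\<Prod>i<d. falling (a i + r0 i) (r i))
      = multinom d m (\<lambda>i. a i + r i) * (\<Prod>i<d. falling (a i + r i) (r i))"
    by (auto simp: multinom_def r0_def intro!: prod.cong)
  also have "\<dots> = falling m R * multinom d (m - R) a" by (rule falling_multinom_shift[OF R])
  moreover have "pmono d (\<lambda>i. a i + r0 i) x = pmono d r x * pmono d a x"
    unfolding pmono_def prod.distrib[symmetric] by (intro prod.cong) (auto simp: r0_def power_add)
  ultimately show "multinom d m (\<lambda>i. a i + (if i < d then r i else 0))
        * (\<Prod>i<d. falling (a i + (if i < d then r i else 0)) (r i)) * pmono d (\<lambda>i. a i + (if i < d then r i else 0)) x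
      = falling m R * pmono d r x * (multinom d (m - R) a * pmono d a x)"
    unfolding r0_def by simp
next
  fix b assume b: "b \<in> {l \<in> mindex_eq d m. \<forall>i<d. r i \<le> l i}"
  show "(\<lambda>i. b i - r i + (if i < d then r i else 0)) = b" using b by (auto simp: mindex_eq_def fun_eq_iff)
  have "(\<Sum>i<d. b i - r i) = (\<Sum>i<d. b i) - R"
    unfolding R(1) using b by (subst sum_subtractf_nat) auto
  then show "(\<lambda>i. b i - r i) \<in> mindex_eq d (m - R)" using b by (auto simp: mindex_eq_def)
qed

lemma falling_multinomial:
  "(\<Sum>l\<in>mindex_eq d m. multinom d m l * (\<Prod>i<d. falling (l i) (r i)) * pmono d l x)
     = falling m (\<Sum>i<d. r i) * pmono d r x * (\<Sum>i<d. x i) ^ (m - (\<Sum>i<d. r i))"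
proof -
  define R where "R = (\<Sum>i<d. r i)"
  define L where "L = {l \<in> mindex_eq d m. \<forall>i<d. r i \<le> l i}"
  have restrict: "(\<Sum>l\<in>mindex_eq d m. multinom d m l * (\<Prod>i<d. falling (l i) (r i)) * pmono d l x)
      = (\<Sum>l\<in>L. multinom d m l * (\<Prod>i<d. falling (l i) (r i)) * pmono d l x)"
    by (rule sum.mono_neutral_right)
      (auto simp: L_def finite_mindex_eq falling_def intro!: prod_zero)
  show ?thesis
  proof (cases "R \<le> m")
    case False
    have "R \<le> (\<Sum>i<d. l i)" if "l \<in> L" for l
      unfolding R_def by (intro sum_mono) (use that in \<open>auto simp: L_def\<close>)
    then have "L = {}" using False by (fastforce simp: L_def mindex_eq_def)
    then show ?thesis unfolding restrict R_def[symmetric] using False by (simp add: falling_def)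
  next
    case True
    show ?thesis
      unfolding restrict L_def falling_multinomial_shift[OF R_def True, symmetric] R_def[symmetric]
      by (simp add: sum_distrib_left[symmetric] multinomial_thm)
  qed
qed

section \<open>Rising factorials, falling factorials and alternating sums\<close>

text \<open>Coefficients expressing the rising factorial (b + l)_j as a polynomial in l in the
  basis of falling factorials: (b + l)_j = sum_r rf_coeff b j r * l!/(l-r)!.\<close>

primrec rf_coeff :: "real \<Rightarrow> nat \<Rightarrow> nat \<Rightarrow> real" where
  "rf_coeff b 0 r = (if r = 0 then 1 else 0)"
| "rf_coeff b (Suc j) r = (if r = 0 then 0 else rf_coeff b j (r - 1)) + (real r + b + real j) * rf_coeff b j r"

lemma rf_coeff_above: "j < r \<Longrightarrow> rf_coeff b j r = 0"
  by (induction j arbitrary: r) auto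

lemma rf_coeff_diag: "rf_coeff b j j = 1"
  by (induction j) (auto simp: rf_coeff_above)

lemma falling_step: "falling l r * real l = falling l (Suc r) + real r * falling l r"
proof -
  consider "Suc r \<le> l" | "r = l" | "l < r" by linarith
  then show ?thesis
  proof cases
    case 1
    then have "fact (l - r) = real (l - r) * fact (l - Suc r)"
      by (metis Suc_diff_le diff_Suc_Suc fact_Suc of_nat_fact Suc_le_lessD diff_less_Suc)
    moreover have "real (l - r) = real l - real r" using 1 by (auto simp: of_nat_diff)
    ultimately have "real l * fact (l - Suc r) = fact (l - r) + real r * fact (l - Suc r)"
      by (simp add: algebra_simps)
    then show ?thesis using 1 by (simp add: falling_def field_simps)
  qed (auto simp: falling_def)
qed

lemma pochhammer_falling_expansion: "pochhammer (b + real l) j = (\<Sum>r\<le>j. rf_coeff b j r * falling l r)"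
proof (induction j)
  case 0
  then show ?case by (simp add: falling_def)
next
  case (Suc j)
  have "pochhammer (b + real l) (Suc j) = (\<Sum>r\<le>j. rf_coeff b j r * (falling l r * (b + real l + real j)))"
    by (simp add: pochhammer_rec' Suc.IH sum_distrib_left sum_distrib_right mult_ac)
  also have "\<dots> = (\<Sum>r\<le>j. rf_coeff b j r * falling l (Suc r))
                 + (\<Sum>r\<le>j. (real r + b + real j) * rf_coeff b j r * falling l r)"
    using falling_step[of l] by (simp add: algebra_simps sum.distrib)
  also have "(\<Sum>r\<le>j. rf_coeff b j r * falling l (Suc r))
      = (\<Sum>r\<le>Suc j. (if r = 0 then 0 else rf_coeff b j (r - 1)) * falling l r)"
    by (simp only: sum.atMost_Suc_shift) simp
  also have "(\<Sum>r\<le>j. (real r + b + real j) * rf_coeff b j r * falling l r)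
      = (\<Sum>r\<le>Suc j. (real r + b + real j) * rf_coeff b j r * falling l r)"
    by (simp add: rf_coeff_above)
  finally show ?case by (simp add: sum.distrib[symmetric] algebra_simps)
qed

text \<open>The N-th finite difference kills polynomials of degree < N.\<close>

lemma alternating_binomial_sum: assumes "N > 0" shows "(\<Sum>m\<le>N. (-1) ^ (N - m) * real (N choose m)) = 0"
  using binomial_ring[of 1 "-1::real" N] zero_power[OF assms, where 'a = real] by (simp add: mult.commute)

lemma binomial_falling_absorb:
  assumes "s \<le> m" "m \<le> n"
  shows "real (n choose m) * falling m s = falling n s * real ((n - s) choose (m - s))"
proof -
  have "real (n choose m) = fact n / (fact m * fact (n - m))" using assms by (intro binomial_fact) auto
  moreover have "real ((n - s) choose (m - s)) = fact (n - s) / (fact (m - s) * fact (n - m))"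
    using assms binomial_fact[of "m - s" "n - s", where 'a = real] by simp
  ultimately show ?thesis using assms by (simp add: falling_def)
qed

lemma alternating_falling_absorb:
  assumes "s \<le> n"
  shows "(\<Sum>m\<le>n. (-1) ^ (n - m) * real (n choose m) * falling m s * h m)
       = falling n s * (\<Sum>m\<le>n - s. (-1) ^ (n - s - m) * real ((n - s) choose m) * h (m + s))"
proof -
  have "(\<Sum>m\<le>n. (-1) ^ (n - m) * real (n choose m) * falling m s * h m)
      = (\<Sum>m\<in>{s..n}. (-1) ^ (n - m) * real (n choose m) * falling m s * h m)"
    by (rule sum.mono_neutral_right) (auto simp: falling_def)
  also have "\<dots> = (\<Sum>m\<le>n - s. (-1) ^ (n - (m + s)) * real (n choose (m + s)) * falling (m + s) s * h (m + s))"
    by (rule sum.reindex_bij_witness[where i = "\<lambda>m. m + s" and j = "\<lambda>m. m - s"]) (use assms in auto)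
  also have "\<dots> = (\<Sum>m\<le>n - s. falling n s * ((-1) ^ (n - s - m) * real ((n - s) choose m) * h (m + s)))"
  proof (intro sum.cong refl)
    fix m assume "m \<in> {..n - s}"
    then have "real (n choose (m + s)) * falling (m + s) s = falling n s * real ((n - s) choose m)"
      using binomial_falling_absorb[of s "m + s" n] assms by simp
    moreover have "n - (m + s) = n - s - m" by simp
    ultimately show "(-1) ^ (n - (m + s)) * real (n choose (m + s)) * falling (m + s) s * h (m + s)
        = falling n s * ((-1) ^ (n - s - m) * real ((n - s) choose m) * h (m + s))"
      by (simp add: mult_ac)
  qed
  finally show ?thesis by (simp add: sum_distrib_left)
qed

lemma alternating_falling: assumes "r < N"
  shows "(\<Sum>m\<le>N. (-1) ^ (N - m) * real (N choose m) * falling m r) = 0"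
  using alternating_falling_absorb[of r N "\<lambda>_. 1"] alternating_binomial_sum[of "N - r"] assms by simp

lemma alternating_pochhammer: assumes "t < N"
  shows "(\<Sum>m\<le>N. (-1) ^ (N - m) * real (N choose m) * pochhammer (c + real m) t) = 0"
proof -
  have "(\<Sum>m\<le>N. (-1) ^ (N - m) * real (N choose m) * pochhammer (c + real m) t)
      = (\<Sum>r\<le>t. rf_coeff c t r * (\<Sum>m\<le>N. (-1) ^ (N - m) * real (N choose m) * falling m r))"
    by (simp add: pochhammer_falling_expansion sum_distrib_left mult_ac sum.swap[of _ "{..N}"])
  also have "\<dots> = 0" using assms by (simp add: alternating_falling)
  finally show ?thesis .
qed

text \<open>The coefficient sum_m a_nm (m)_s / (theta+m)_k that appears when the kernel operator is
  applied to a monomial of degree k; it vanishes for s <= k < n and equals 1 for s = k = n.\<close>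

definition kcoef :: "real \<Rightarrow> nat \<Rightarrow> nat \<Rightarrow> nat \<Rightarrow> real" where
  "kcoef \<theta> n s k = (\<Sum>m\<le>n. a_coef \<theta> n m * falling m s / pochhammer (\<theta> + real m) k)"

lemma a_coef_binomial: assumes "1 \<le> n" "m \<le> n"
  shows "a_coef \<theta> n m = (\<theta> + 2 * real n - 1) / fact n
           * ((-1) ^ (n - m) * real (n choose m)) * pochhammer (\<theta> + real m) (n - 1)"
  using assms by (simp add: a_coef_def binomial_fact)

lemma kcoef_below: assumes th: "\<theta> > 0" and "s \<le> k" "k < n" shows "kcoef \<theta> n s k = 0"
proof -
  define t where "t = n - 1 - k"
  define C where "C = (\<theta> + 2 * real n - 1) / fact n"
  have summand: "a_coef \<theta> n m * falling m s / pochhammer (\<theta> + real m) k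
       = C * ((-1) ^ (n - m) * real (n choose m) * falling m s * pochhammer ((\<theta> + real k) + real m) t)"
    if m: "m \<le> n" for m
  proof -
    have "pochhammer (\<theta> + real m) (n - 1) = pochhammer (\<theta> + real m) k * pochhammer (\<theta> + real k + real m) t"
      unfolding t_def using assms pochhammer_product'[of "\<theta> + real m" k "n - 1 - k"] by (simp add: add_ac)
    moreover have "pochhammer (\<theta> + real m) k > 0" using th by (intro pochhammer_pos) simp
    ultimately show ?thesis using assms m by (simp add: a_coef_binomial C_def)
  qed
  have "kcoef \<theta> n s k = C * (\<Sum>m\<le>n. (-1) ^ (n - m) * real (n choose m) * falling m s
                                       * pochhammer ((\<theta> + real k) + real m) t)"
    unfolding kcoef_def sum_distrib_left by (rule sum.cong) (simp_all add: summand)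
  also have "\<dots> = C * (falling n s * (\<Sum>m\<le>n - s. (-1) ^ (n - s - m) * real ((n - s) choose m)
                                         * pochhammer ((\<theta> + real k + real s) + real m) t))"
    using assms by (simp add: alternating_falling_absorb add_ac)
  also have "\<dots> = 0" by (subst alternating_pochhammer) (use assms in \<open>simp_all add: t_def\<close>)
  finally show ?thesis .
qed

lemma kcoef_diag: assumes th: "\<theta> > 0" shows "kcoef \<theta> n n n = 1"
proof -
  have "kcoef \<theta> n n n = (\<Sum>m\<in>{n}. a_coef \<theta> n m * falling m n / pochhammer (\<theta> + real m) n)"
    unfolding kcoef_def by (rule sum.mono_neutral_right) (auto simp: falling_def)
  also have "\<dots> = a_coef \<theta> n n * fact n / pochhammer (\<theta> + real n) n" by (simp add: falling_def)
  also have "\<dots> = 1"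
  proof (cases n)
    case (Suc k)
    have "pochhammer (\<theta> + real n) n = pochhammer (\<theta> + real n) k * (\<theta> + real n + real k)"
      by (simp add: Suc pochhammer_rec')
    moreover have "pochhammer (\<theta> + real n) k > 0" using th by (intro pochhammer_pos) simp
    moreover have "\<theta> + real n + real k > 0" using th by simp
    moreover have "\<theta> + 2 * real n - 1 = \<theta> + real n + real k" by (simp add: Suc)
    ultimately show ?thesis by (simp add: a_coef_def Suc)
  qed (simp add: a_coef_def)
  finally show ?thesis .
qed

lemma multinomial_pochhammer:
  "(\<Sum>l\<in>mindex_eq d m. multinom d m l * pmono d l x * (\<Prod>i<d. pochhammer (b + real (l i)) (j i)))
   = (\<Sum>r\<in>mbox d j. (\<Prod>i<d. rf_coeff b (j i) (r i))
        * (falling m (\<Sum>i<d. r i) * pmono d r x * (\<Sum>i<d. x i) ^ (m - (\<Sum>i<d. r i))))"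
proof -
  have expand: "(\<Prod>i<d. pochhammer (b + real (l i)) (j i))
      = (\<Sum>r\<in>mbox d j. (\<Prod>i<d. rf_coeff b (j i) (r i)) * (\<Prod>i<d. falling (l i) (r i)))" for l
    by (simp add: pochhammer_falling_expansion prod_sum_mbox prod.distrib)
  have "(\<Sum>l\<in>mindex_eq d m. multinom d m l * pmono d l x * (\<Prod>i<d. pochhammer (b + real (l i)) (j i)))
      = (\<Sum>r\<in>mbox d j. (\<Prod>i<d. rf_coeff b (j i) (r i))
          * (\<Sum>l\<in>mindex_eq d m. multinom d m l * (\<Prod>i<d. falling (l i) (r i)) * pmono d l x))"
    unfolding expand by (simp add: sum_distrib_left sum.swap[of _ "mindex_eq d m"] mult_ac)
  then show ?thesis by (simp add: falling_multinomial)
qed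

section \<open>Polynomial spaces and the permutation action\<close>

lemma pmono_add: "pmono d a x * pmono d b x = pmono d (\<lambda>i. a i + b i) x"
  unfolding pmono_def by (simp add: prod.distrib[symmetric] power_add)

lemma pmono_perm: assumes "\<tau> permutes {..<d}"
  shows "pmono d l (perm_act \<tau> x) = pmono d (l \<circ> inv \<tau>) x"
proof -
  have "pmono d l (perm_act \<tau> x) = (\<Prod>i<d. x (\<tau> (inv \<tau> i)) ^ l (inv \<tau> i))"
    using prod.permute[OF permutes_inv[OF assms], of "\<lambda>i. x (\<tau> i) ^ l i"]
    by (simp add: pmono_def perm_act_def comp_def)
  then show ?thesis using permutes_inverses(1)[OF assms] by (simp add: pmono_def)
qed

lemma mindex_le_perm: assumes "\<tau> permutes {..<d}" "l \<in> mindex_le d N" shows "l \<circ> \<tau> \<in> mindex_le d N"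
  using assms sum.permute[OF assms(1), of l] by (auto simp: mindex_le_def permutes_def)

lemma mindex_eq_perm: assumes "\<tau> permutes {..<d}" "l \<in> mindex_eq d m" shows "l \<circ> \<tau> \<in> mindex_eq d m"
  using assms sum.permute[OF assms(1), of l] by (auto simp: mindex_eq_def permutes_def)

lemma polys_monomial_comb:
  assumes "finite I" "\<And>i. i \<in> I \<Longrightarrow> \<rho> i \<in> mindex_le d N"
  shows "(\<lambda>x. \<Sum>i\<in>I. w i * pmono d (\<rho> i) x) \<in> polys d N"
proof -
  define c where "c l = (\<Sum>i\<in>{i\<in>I. \<rho> i = l}. w i)" for l
  have "(\<Sum>i\<in>I. w i * pmono d (\<rho> i) x) = (\<Sum>l\<in>mindex_le d N. c l * pmono d l x)" for x
  proof -
    have "(\<Sum>l\<in>mindex_le d N. c l * pmono d l x)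
        = (\<Sum>l\<in>mindex_le d N. \<Sum>i\<in>{i\<in>I. \<rho> i = l}. w i * pmono d (\<rho> i) x)"
      unfolding c_def sum_distrib_right by (intro sum.cong refl) auto
    also have "\<dots> = (\<Sum>i\<in>I. w i * pmono d (\<rho> i) x)"
      by (rule sum.group) (use assms finite_mindex_le in auto)
    finally show ?thesis ..
  qed
  then show ?thesis unfolding polys_def by blast
qed

lemma polys_pmono: "l \<in> mindex_le d N \<Longrightarrow> pmono d l \<in> polys d N"
  using polys_monomial_comb[of "{l}" "\<lambda>_. l" d N "\<lambda>_. 1"] by simp

lemma polys_finsum:
  assumes "finite I" "\<And>i. i \<in> I \<Longrightarrow> f i \<in> polys d N"
  shows "(\<lambda>x. \<Sum>i\<in>I. f i x) \<in> polys d N"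
proof -
  have "\<forall>i\<in>I. \<exists>c. f i = (\<lambda>x. \<Sum>l\<in>mindex_le d N. c l * pmono d l x)"
    using assms(2) by (auto simp: polys_def)
  from bchoice[OF this] obtain C
    where C: "\<forall>i\<in>I. f i = (\<lambda>x. \<Sum>l\<in>mindex_le d N. C i l * pmono d l x)" by blast
  have "(\<Sum>i\<in>I. f i x) = (\<Sum>l\<in>mindex_le d N. (\<Sum>i\<in>I. C i l) * pmono d l x)" for x
  proof -
    have "(\<Sum>i\<in>I. f i x) = (\<Sum>i\<in>I. \<Sum>l\<in>mindex_le d N. C i l * pmono d l x)" using C by simp
    also have "\<dots> = (\<Sum>l\<in>mindex_le d N. (\<Sum>i\<in>I. C i l) * pmono d l x)"
      by (subst sum.swap) (simp add: sum_distrib_right)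
    finally show ?thesis .
  qed
  then show ?thesis unfolding polys_def mem_Collect_eq by (intro exI[where x = "\<lambda>l. \<Sum>i\<in>I. C i l"]) blast
qed

lemma polys_cmult: "f \<in> polys d N \<Longrightarrow> (\<lambda>x. c * f x) \<in> polys d N"
proof -
  assume "f \<in> polys d N"
  then obtain C where "f = (\<lambda>x. \<Sum>l\<in>mindex_le d N. C l * pmono d l x)" by (auto simp: polys_def)
  then have "(\<lambda>x. c * f x) = (\<lambda>x. \<Sum>l\<in>mindex_le d N. (c * C l) * pmono d l x)"
    by (simp add: sum_distrib_left mult_ac)
  then show ?thesis unfolding polys_def mem_Collect_eq by (intro exI[where x = "\<lambda>l. c * C l"])
qed

lemma polys_add: "f \<in> polys d N \<Longrightarrow> g \<in> polys d N \<Longrightarrow> (\<lambda>x. f x + g x) \<in> polys d N"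
  using polys_finsum[of "{0::nat,1}" "\<lambda>i. if i = 0 then f else g" d N] by simp

lemma polys_diff: "f \<in> polys d N \<Longrightarrow> g \<in> polys d N \<Longrightarrow> (\<lambda>x. f x - g x) \<in> polys d N"
  using polys_add[of f d N "\<lambda>x. (-1) * g x"] polys_cmult[of g d N "-1"] by simp

lemma polys_mult:
  assumes "f \<in> polys d N" "g \<in> polys d M"
  shows "(\<lambda>x. f x * g x) \<in> polys d (N + M)"
proof -
  obtain c e where f: "f = (\<lambda>x. \<Sum>a\<in>mindex_le d N. c a * pmono d a x)"
    and g: "g = (\<lambda>x. \<Sum>b\<in>mindex_le d M. e b * pmono d b x)"
    using assms by (auto simp: polys_def)
  have "(\<lambda>x. f x * g x) = (\<lambda>x. \<Sum>p\<in>mindex_le d N \<times> mindex_le d M.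
           (c (fst p) * e (snd p)) * pmono d (\<lambda>i. fst p i + snd p i) x)"
  proof
    fix x
    have "f x * g x = (\<Sum>a\<in>mindex_le d N. \<Sum>b\<in>mindex_le d M. (c a * pmono d a x) * (e b * pmono d b x))"
      unfolding f g by (rule sum_product)
    also have "\<dots> = (\<Sum>p\<in>mindex_le d N \<times> mindex_le d M. (c (fst p) * pmono d (fst p) x) * (e (snd p) * pmono d (snd p) x))"
      by (simp add: sum.cartesian_product split_def)
    also have "\<dots> = (\<Sum>p\<in>mindex_le d N \<times> mindex_le d M. (c (fst p) * e (snd p)) * pmono d (\<lambda>i. fst p i + snd p i) x)"
      by (rule sum.cong[OF refl]) (simp add: pmono_add[symmetric] mult_ac)
    finally show "f x * g x = \<dots>" .
  qed
  also have "\<dots> \<in> polys d (N + M)"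
    by (rule polys_monomial_comb) (auto simp: finite_mindex_le, auto simp: mindex_le_def sum.distrib add_mono)
  finally show ?thesis .
qed

lemma polys_perm: assumes "\<tau> permutes {..<d}" "f \<in> polys d N"
  shows "(\<lambda>x. f (perm_act \<tau> x)) \<in> polys d N"
proof -
  obtain C where C: "f = (\<lambda>x. \<Sum>l\<in>mindex_le d N. C l * pmono d l x)" using assms(2) by (auto simp: polys_def)
  then have "(\<lambda>x. f (perm_act \<tau> x)) = (\<lambda>x. \<Sum>l\<in>mindex_le d N. C l * pmono d (l \<circ> inv \<tau>) x)"
    using pmono_perm[OF assms(1)] by simp
  also have "\<dots> \<in> polys d N"
    by (rule polys_monomial_comb[OF finite_mindex_le mindex_le_perm[OF permutes_inv[OF assms(1)]]])
  finally show ?thesis .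
qed

lemma bdd_meas_polys: "f \<in> polys d n \<Longrightarrow> bdd_meas d f"
  unfolding polys_def using bdd_meas_sum[OF finite_mindex_le] bdd_meas_cmult bdd_meas_pmono by auto

lemma finite_Sym: "finite (Sym d)"
  unfolding Sym_def by (rule finite_permutations) simp

lemma card_Sym: "card (Sym d) = fact d"
  unfolding Sym_def by (rule card_permutations) simp_all

lemma Sym_inv: "\<sigma> \<in> Sym d \<Longrightarrow> inv \<sigma> \<in> Sym d"
  unfolding Sym_def by (simp add: permutes_inv)

lemma perm_act_comp: "perm_act \<sigma> (perm_act \<tau> x) = perm_act (\<tau> \<circ> \<sigma>) x"
  by (simp add: perm_act_def)

lemma perm_act_simplex: assumes s: "\<sigma> \<in> Sym d" and x: "x \<in> dsimplex d" shows "perm_act \<sigma> x \<in> dsimplex d"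
proof -
  have p: "\<sigma> permutes {..<d}" using s by (simp add: Sym_def)
  have "(\<Sum>i<d. x (\<sigma> i)) = (\<Sum>i<d. x i)" using sum.permute[OF p, of x] by (simp add: comp_def)
  moreover have "\<forall>i<d. \<sigma> i < d" using p permutes_in_image by fastforce
  moreover have "\<forall>i. d \<le> i \<longrightarrow> \<sigma> i = i" using p by (simp add: permutes_def)
  ultimately show ?thesis using x by (auto simp: dsimplex_def perm_act_def)
qed

lemma sum_Sym_left: assumes "\<tau> \<in> Sym d" shows "(\<Sum>\<sigma>\<in>Sym d. F (\<tau> \<circ> \<sigma>)) = (\<Sum>\<sigma>\<in>Sym d. F \<sigma>)"
proof (rule sum.reindex_bij_witness[where i = "\<lambda>\<sigma>. inv \<tau> \<circ> \<sigma>" and j = "\<lambda>\<sigma>. \<tau> \<circ> \<sigma>"])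
  have p: "\<tau> permutes {..<d}" using assms by (simp add: Sym_def)
  show "\<And>a. inv \<tau> \<circ> (\<tau> \<circ> a) = a" using permutes_inv_o(2)[OF p] by (simp add: o_assoc)
  show "\<And>b. \<tau> \<circ> (inv \<tau> \<circ> b) = b" using permutes_inv_o(1)[OF p] by (simp add: o_assoc)
qed (use assms in \<open>auto simp: Sym_def permutes_compose permutes_inv\<close>)

lemma sum_Sym_right: assumes "\<tau> \<in> Sym d" shows "(\<Sum>\<sigma>\<in>Sym d. F (\<sigma> \<circ> \<tau>)) = (\<Sum>\<sigma>\<in>Sym d. F \<sigma>)"
proof (rule sum.reindex_bij_witness[where i = "\<lambda>\<sigma>. \<sigma> \<circ> inv \<tau>" and j = "\<lambda>\<sigma>. \<sigma> \<circ> \<tau>"])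
  have p: "\<tau> permutes {..<d}" using assms by (simp add: Sym_def)
  show "\<And>a. a \<circ> \<tau> \<circ> inv \<tau> = a" using permutes_inv_o(1)[OF p] by (simp add: o_assoc[symmetric])
  show "\<And>b. b \<circ> inv \<tau> \<circ> \<tau> = b" using permutes_inv_o(2)[OF p] by (simp add: o_assoc[symmetric])
qed (use assms in \<open>auto simp: Sym_def permutes_compose permutes_inv\<close>)

lemma symmetric_fun_average: "symmetric_fun d (\<lambda>x. c * (\<Sum>\<sigma>\<in>Sym d. g (perm_act \<sigma> x)))"
  unfolding symmetric_fun_def
proof (intro ballI)
  fix \<tau> x assume "\<tau> \<in> Sym d"
  then show "c * (\<Sum>\<sigma>\<in>Sym d. g (perm_act \<sigma> (perm_act \<tau> x))) = c * (\<Sum>\<sigma>\<in>Sym d. g (perm_act \<sigma> x))"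
    unfolding perm_act_comp using sum_Sym_left[of \<tau> d "\<lambda>\<sigma>. g (perm_act \<sigma> x)"] by simp
qed

section \<open>The symmetric Dirichlet law and the kernel G_n\<close>

locale sym_dirichlet =
  fixes \<theta> :: real and d :: nat
  assumes th: "\<theta> > 0" and d2: "2 \<le> d"
begin

lemma param_pos: "\<theta> / real d > 0" using th d2 by simp

sublocale dirichlet d "symparam \<theta> d"
  by unfold_locales (use param_pos d2 in \<open>auto simp: symparam_def\<close>)

definition mom :: "(nat \<Rightarrow> nat) \<Rightarrow> real" where
  "mom l = (\<Prod>i<d. pochhammer (\<theta> / real d) (l i)) / pochhammer \<theta> (\<Sum>i<d. l i)"

lemma sum_symparam: "(\<Sum>i<d. symparam \<theta> d i) = \<theta>"
  using d2 by (simp add: symparam_def)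

lemma E_pmono_mom: "E (pmono d l) = mom l"
  unfolding E_pmono sum_symparam mom_def by (simp add: symparam_def)

lemma mom_pos: "mom l > 0"
  unfolding mom_def using param_pos th by (auto intro!: divide_pos_pos prod_pos pochhammer_pos)

lemma mom_perm: assumes "\<tau> permutes {..<d}" shows "mom (l \<circ> \<tau>) = mom l"
  using prod.permute[OF assms, of "\<lambda>i. pochhammer (\<theta> / real d) (l i)"] sum.permute[OF assms, of l]
  by (simp add: mom_def comp_def)

lemma mom_shift:
  "mom (\<lambda>i. l i + j i) = mom l * (\<Prod>i<d. pochhammer (\<theta> / real d + real (l i)) (j i))
                          / pochhammer (\<theta> + real (\<Sum>i<d. l i)) (\<Sum>i<d. j i)"
proof -
  have "\<theta> + real (\<Sum>i<d. l i) > 0" using th by (metis add_pos_nonneg of_nat_0_le_iff)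
  then have "pochhammer \<theta> (\<Sum>i<d. l i) > 0" "pochhammer (\<theta> + real (\<Sum>i<d. l i)) (\<Sum>i<d. j i) > 0"
    using th by (auto intro: pochhammer_pos simp del: of_nat_sum)
  then show ?thesis
    by (simp add: mom_def pochhammer_product' prod.distrib sum.distrib)
qed

lemma E_perm_invariant: assumes "\<sigma> \<in> Sym d" "h \<in> polys d N"
  shows "E (\<lambda>x. h (perm_act \<sigma> x)) = E h"
proof -
  have p: "\<sigma> permutes {..<d}" using assms(1) by (simp add: Sym_def)
  obtain c where h: "h = (\<lambda>x. \<Sum>l\<in>mindex_le d N. c l * pmono d l x)"
    using assms(2) by (auto simp: polys_def)
  have "E (\<lambda>x. h (perm_act \<sigma> x)) = (\<Sum>l\<in>mindex_le d N. c l * mom (l \<circ> inv \<sigma>))"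
    unfolding h pmono_perm[OF p]
    by (simp add: E_sum finite_mindex_le bdd_meas_cmult bdd_meas_pmono E_cmult E_pmono_mom)
  also have "\<dots> = E h"
    unfolding h by (simp add: E_sum finite_mindex_le bdd_meas_cmult bdd_meas_pmono E_cmult
        E_pmono_mom mom_perm[OF permutes_inv[OF p]])
  finally show ?thesis .
qed

lemma multinom_pos: "multinom d m l > 0"
  unfolding multinom_def by (auto intro!: divide_pos_pos prod_pos)

lemma multinom_perm: assumes "\<tau> permutes {..<d}" shows "multinom d m (l \<circ> \<tau>) = multinom d m l"
  unfolding multinom_def using prod.permute[OF assms, of "\<lambda>i. fact (l i) :: real"] by (simp add: comp_def)

definition xi_weight :: "(nat \<Rightarrow> nat) \<Rightarrow> nat \<Rightarrow> real" where
  "xi_weight l m = multinom d m l / mom l"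

lemma xi_weight_perm: assumes "\<tau> permutes {..<d}" shows "xi_weight (l \<circ> \<tau>) m = xi_weight l m"
  unfolding xi_weight_def multinom_perm[OF assms] mom_perm[OF assms] ..

lemma xi_expand: "xi \<theta> d m x y = (\<Sum>l\<in>mindex_eq d m. xi_weight l m * pmono d l x * pmono d l y)"
  unfolding xi_def
proof (intro sum.cong refl)
  fix l assume l: "l \<in> mindex_eq d m"
  then have "DM d (symparam \<theta> d) l m = multinom d m l * mom l"
    unfolding DM_def mom_def sum_symparam mindex_eq_def by (simp add: symparam_def)
  then show "(multinom d m l)\<^sup>2 * pmono d l x * pmono d l y / DM d (symparam \<theta> d) l m
      = xi_weight l m * pmono d l x * pmono d l y"
    using multinom_pos[of m l] mom_pos[of l] by (simp add: xi_weight_def power2_eq_square)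
qed

lemma xi_perm: assumes t: "\<tau> \<in> Sym d"
  shows "xi \<theta> d m u (perm_act \<tau> v) = xi \<theta> d m (perm_act (inv \<tau>) u) v"
proof -
  have p: "\<tau> permutes {..<d}" using t by (simp add: Sym_def)
  have pi: "inv \<tau> permutes {..<d}" using permutes_inv[OF p] .
  have "xi \<theta> d m u (perm_act \<tau> v) = (\<Sum>l\<in>mindex_eq d m. xi_weight l m * pmono d l u * pmono d (l \<circ> inv \<tau>) v)"
    unfolding xi_expand pmono_perm[OF p] ..
  also have "\<dots> = (\<Sum>l\<in>mindex_eq d m. xi_weight l m * pmono d l (perm_act (inv \<tau>) u) * pmono d l v)"
  proof (rule sum.reindex_bij_witness[where i = "\<lambda>l. l \<circ> \<tau>" and j = "\<lambda>l. l \<circ> inv \<tau>"])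
    fix a assume a: "a \<in> mindex_eq d m"
    show "a \<circ> inv \<tau> \<circ> \<tau> = a" using permutes_inv_o(2)[OF p] by (simp add: o_assoc[symmetric])
    show "a \<circ> inv \<tau> \<in> mindex_eq d m" by (rule mindex_eq_perm[OF pi a])
    have "pmono d (a \<circ> inv \<tau>) (perm_act (inv \<tau>) u) = pmono d a u"
      unfolding pmono_perm[OF pi] permutes_inv_inv[OF p]
      using permutes_inv_o(2)[OF p] by (simp add: o_assoc[symmetric])
    then show "xi_weight (a \<circ> inv \<tau>) m * pmono d (a \<circ> inv \<tau>) (perm_act (inv \<tau>) u) * pmono d (a \<circ> inv \<tau>) v
        = xi_weight a m * pmono d a u * pmono d (a \<circ> inv \<tau>) v"
      unfolding xi_weight_perm[OF pi] by simp
  next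
    fix b assume b: "b \<in> mindex_eq d m"
    show "b \<circ> \<tau> \<circ> inv \<tau> = b" using permutes_inv_o(1)[OF p] by (simp add: o_assoc[symmetric])
    show "b \<circ> \<tau> \<in> mindex_eq d m" by (rule mindex_eq_perm[OF p b])
  qed
  finally show ?thesis unfolding xi_expand .
qed

definition Gker :: "nat \<Rightarrow> (nat \<Rightarrow> real) \<Rightarrow> (nat \<Rightarrow> real) \<Rightarrow> real" where
  "Gker n x y = (\<Sum>m\<le>n. a_coef \<theta> n m * xi \<theta> d m x y)"

definition Gindex :: "nat \<Rightarrow> (nat \<times> (nat \<Rightarrow> nat)) set" where
  "Gindex n = Sigma {..n} (\<lambda>m. mindex_eq d m)"

definition Gweight :: "nat \<Rightarrow> nat \<times> (nat \<Rightarrow> nat) \<Rightarrow> real" where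
  "Gweight n p = a_coef \<theta> n (fst p) * xi_weight (snd p) (fst p)"

lemma finite_Gindex: "finite (Gindex n)"
  unfolding Gindex_def by (auto intro!: finite_SigmaI finite_mindex_eq)

lemma Gindex_le: "p \<in> Gindex n \<Longrightarrow> snd p \<in> mindex_le d n"
  unfolding Gindex_def using mindex_eq_subset_le by (cases p) auto

lemma Gker_expand: "Gker n x y = (\<Sum>p\<in>Gindex n. Gweight n p * pmono d (snd p) x * pmono d (snd p) y)"
proof -
  have "Gker n x y = (\<Sum>m\<le>n. \<Sum>l\<in>mindex_eq d m. a_coef \<theta> n m * xi_weight l m * pmono d l x * pmono d l y)"
    unfolding Gker_def xi_expand by (simp add: sum_distrib_left mult_ac)
  also have "\<dots> = (\<Sum>p\<in>Gindex n. Gweight n p * pmono d (snd p) x * pmono d (snd p) y)"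
    unfolding Gindex_def Gweight_def by (subst sum.Sigma) (auto simp: finite_mindex_eq split_def)
  finally show ?thesis .
qed

lemma Gker_polys: "Gker n x \<in> polys d n"
proof -
  have "Gker n x = (\<lambda>y. \<Sum>p\<in>Gindex n. (Gweight n p * pmono d (snd p) x) * pmono d (snd p) y)"
    by (simp add: Gker_expand[abs_def])
  also have "\<dots> \<in> polys d n" by (rule polys_monomial_comb[OF finite_Gindex Gindex_le])
  finally show ?thesis .
qed

lemma bdd_meas_Gker: "bdd_meas d (Gker n x)"
  by (rule bdd_meas_polys[OF Gker_polys])

lemma Gker_perm: assumes "\<tau> \<in> Sym d"
  shows "Gker n u (perm_act \<tau> v) = Gker n (perm_act (inv \<tau>) u) v"
  unfolding Gker_def xi_perm[OF assms] ..

definition Kop :: "nat \<Rightarrow> ((nat \<Rightarrow> real) \<Rightarrow> real) \<Rightarrow> (nat \<Rightarrow> real) \<Rightarrow> real" where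
  "Kop n f x = E (\<lambda>y. Gker n x y * f y)"

lemma Kop_expand: assumes "bdd_meas d f"
  shows "Kop n f x = (\<Sum>p\<in>Gindex n. Gweight n p * pmono d (snd p) x * E (\<lambda>y. pmono d (snd p) y * f y))"
proof -
  have "Kop n f x = E (\<lambda>y. \<Sum>p\<in>Gindex n. (Gweight n p * pmono d (snd p) x) * (pmono d (snd p) y * f y))"
    unfolding Kop_def Gker_expand sum_distrib_right by (simp add: mult_ac)
  also have "\<dots> = (\<Sum>p\<in>Gindex n. Gweight n p * pmono d (snd p) x * E (\<lambda>y. pmono d (snd p) y * f y))"
    by (subst E_sum[OF finite_Gindex]) (auto intro!: bdd_meas_cmult bdd_meas_mult bdd_meas_pmono assms simp: E_cmult)
  finally show ?thesis .
qed

lemma Kop_polys: assumes "bdd_meas d f" shows "Kop n f \<in> polys d n"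
proof -
  have "Kop n f = (\<lambda>x. \<Sum>p\<in>Gindex n. (Gweight n p * E (\<lambda>y. pmono d (snd p) y * f y)) * pmono d (snd p) x)"
    by (rule ext) (simp add: Kop_expand[OF assms] mult_ac)
  also have "\<dots> \<in> polys d n" by (rule polys_monomial_comb[OF finite_Gindex Gindex_le])
  finally show ?thesis .
qed

text \<open>The kernel is symmetric, so the operator is self-adjoint.\<close>

lemma Kop_self_adjoint: assumes f: "bdd_meas d f" and g: "bdd_meas d g"
  shows "E (\<lambda>z. Kop n f z * g z) = E (\<lambda>z. Kop n g z * f z)"
proof -
  have bilinear: "E (\<lambda>z. Kop n f z * g z) = (\<Sum>p\<in>Gindex n. Gweight n p *
           E (\<lambda>y. pmono d (snd p) y * f y) * E (\<lambda>y. pmono d (snd p) y * g y))"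
    if f: "bdd_meas d f" and g: "bdd_meas d g" for f g
  proof -
    have "E (\<lambda>z. Kop n f z * g z) = E (\<lambda>z. \<Sum>p\<in>Gindex n.
           (Gweight n p * E (\<lambda>y. pmono d (snd p) y * f y)) * (pmono d (snd p) z * g z))"
      unfolding Kop_expand[OF f] sum_distrib_right by (simp add: mult_ac)
    then show ?thesis
      by (subst (asm) E_sum[OF finite_Gindex])
        (auto intro!: bdd_meas_cmult bdd_meas_mult bdd_meas_pmono f g simp: E_cmult)
  qed
  show ?thesis unfolding bilinear[OF f g] bilinear[OF g f] by (simp add: mult_ac)
qed

lemma Kop_lin: assumes "finite J"
  shows "Kop n (\<lambda>y. \<Sum>j\<in>J. c j * pmono d j y) x = (\<Sum>j\<in>J. c j * Kop n (pmono d j) x)"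
proof -
  have "Kop n (\<lambda>y. \<Sum>j\<in>J. c j * pmono d j y) x = E (\<lambda>y. \<Sum>j\<in>J. c j * (Gker n x y * pmono d j y))"
    unfolding Kop_def sum_distrib_left by (simp add: mult_ac)
  also have "\<dots> = (\<Sum>j\<in>J. c j * Kop n (pmono d j) x)"
    by (subst E_sum[OF assms]) (auto intro!: bdd_meas_cmult bdd_meas_mult bdd_meas_Gker bdd_meas_pmono
        simp: E_cmult Kop_def)
  finally show ?thesis .
qed

end

section \<open>The kernel operator on monomials\<close>

context sym_dirichlet
begin

definition box_coeff :: "(nat \<Rightarrow> nat) \<Rightarrow> (nat \<Rightarrow> nat) \<Rightarrow> real" where
  "box_coeff j r = (\<Prod>i<d. rf_coeff (\<theta> / real d) (j i) (r i))"

lemma Kop_pmono: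
  assumes j: "j \<in> mindex_eq d k" and x: "x \<in> dsimplex d"
  shows "Kop n (pmono d j) x = (\<Sum>r\<in>mbox d j. box_coeff j r * kcoef \<theta> n (\<Sum>i<d. r i) k * pmono d r x)"
proof -
  have sj: "(\<Sum>i<d. j i) = k" using j by (simp add: mindex_eq_def)
  have sx: "(\<Sum>i<d. x i) = 1" using x by (simp add: dsimplex_def)
  have inner: "(\<Sum>l\<in>mindex_eq d m. a_coef \<theta> n m * xi_weight l m * pmono d l x * mom (\<lambda>i. l i + j i))
      = a_coef \<theta> n m / pochhammer (\<theta> + real m) k
        * (\<Sum>l\<in>mindex_eq d m. multinom d m l * pmono d l x * (\<Prod>i<d. pochhammer (\<theta> / real d + real (l i)) (j i)))"
    for m
    unfolding sum_distrib_left
  proof (intro sum.cong refl)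
    fix l assume "l \<in> mindex_eq d m"
    then have "(\<Sum>i<d. l i) = m" by (simp add: mindex_eq_def)
    then show "a_coef \<theta> n m * xi_weight l m * pmono d l x * mom (\<lambda>i. l i + j i)
        = a_coef \<theta> n m / pochhammer (\<theta> + real m) k
          * (multinom d m l * pmono d l x * (\<Prod>i<d. pochhammer (\<theta> / real d + real (l i)) (j i)))"
      unfolding mom_shift sj xi_weight_def using mom_pos[of l] by simp
  qed
  have "Kop n (pmono d j) x = (\<Sum>p\<in>Gindex n. Gweight n p * pmono d (snd p) x * mom (\<lambda>i. snd p i + j i))"
    unfolding Kop_expand[OF bdd_meas_pmono] pmono_add E_pmono_mom ..
  also have "\<dots> = (\<Sum>m\<le>n. \<Sum>l\<in>mindex_eq d m. a_coef \<theta> n m * xi_weight l m * pmono d l x * mom (\<lambda>i. l i + j i))"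
    unfolding Gindex_def Gweight_def by (subst sum.Sigma) (auto simp: finite_mindex_eq split_def)
  also have "\<dots> = (\<Sum>m\<le>n. a_coef \<theta> n m / pochhammer (\<theta> + real m) k *
        (\<Sum>r\<in>mbox d j. box_coeff j r * (falling m (\<Sum>i<d. r i) * pmono d r x)))"
    unfolding inner multinomial_pochhammer sx box_coeff_def by simp
  also have "\<dots> = (\<Sum>r\<in>mbox d j. box_coeff j r * (\<Sum>m\<le>n. a_coef \<theta> n m * falling m (\<Sum>i<d. r i)
                     / pochhammer (\<theta> + real m) k) * pmono d r x)"
    unfolding sum_distrib_left sum_distrib_right by (subst sum.swap) (simp add: mult_ac)
  finally show ?thesis unfolding kcoef_def .
qed

lemma Kop_pmono_low: assumes j: "j \<in> mindex_le d N" and deg: "(\<Sum>i<d. j i) < n" and x: "x \<in> dsimplex d"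
  shows "Kop n (pmono d j) x = 0"
proof -
  have "kcoef \<theta> n (\<Sum>i<d. r i) (\<Sum>i<d. j i) = 0" if "r \<in> mbox d j" for r
    using kcoef_below[OF th mbox_sum_le[OF that] deg] .
  then show ?thesis unfolding Kop_pmono[OF mindex_le_degree[OF j] x] by simp
qed

lemma Kop_pmono_top: assumes j: "j \<in> mindex_eq d n" and x: "x \<in> dsimplex d"
  shows "Kop n (pmono d j) x = pmono d j x
           + (\<Sum>r\<in>mbox d j - {j}. box_coeff j r * kcoef \<theta> n (\<Sum>i<d. r i) n * pmono d r x)"
proof -
  have jm: "j \<in> mbox d j" using mbox_self mindex_eq_subset_le[of n n d] j by blast
  have "box_coeff j j = 1" by (simp add: box_coeff_def rf_coeff_diag)
  moreover have "kcoef \<theta> n (\<Sum>i<d. j i) n = 1" using j kcoef_diag[OF th] by (simp add: mindex_eq_def)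
  ultimately show ?thesis unfolding Kop_pmono[OF j x] by (subst sum.remove[OF finite_mbox jm]) simp
qed

lemma Kop_poly_low: assumes f: "f \<in> polys d m" and mn: "m < n" and x: "x \<in> dsimplex d"
  shows "Kop n f x = 0"
proof -
  obtain c where c: "f = (\<lambda>y. \<Sum>j\<in>mindex_le d m. c j * pmono d j y)" using f by (auto simp: polys_def)
  have "Kop n (pmono d j) x = 0" if j: "j \<in> mindex_le d m" for j
    using j mn by (intro Kop_pmono_low[OF j _ x]) (auto simp: mindex_le_def)
  then show ?thesis unfolding c Kop_lin[OF finite_mindex_le] by simp
qed

text \<open>Hence A_n f - f is orthogonal to V_n for every polynomial f of degree <= n: on a monomial
  the defect is a combination of monomials of degree < n.\<close>

lemma Kop_pmono_defect_orth:
  assumes j: "j \<in> mindex_le d n" and P: "P \<in> Vspace d (symparam \<theta> d) n"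
  shows "E (\<lambda>y. (Kop n (pmono d j) y - pmono d j y) * P y) = 0"
proof -
  have P_orth: "E (\<lambda>y. pmono d r y * P y) = 0" if "(\<Sum>i<d. r i) < n" "r \<in> mindex_le d N" for r N
  proof -
    have "pmono d r \<in> polys d (\<Sum>i<d. r i)" using that(2) by (intro polys_pmono) (auto simp: mindex_le_def)
    then have "dir_inner d (symparam \<theta> d) P (pmono d r) = 0" using P that(1) by (auto simp: Vspace_def)
    then show ?thesis by (simp add: dir_inner_def mult.commute)
  qed
  show ?thesis
  proof (cases "(\<Sum>i<d. j i) < n")
    case True
    then have "E (\<lambda>y. (Kop n (pmono d j) y - pmono d j y) * P y) = E (\<lambda>y. (-1) * (pmono d j y * P y))"
      by (intro E_cong) (simp add: Kop_pmono_low[OF j])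
    also have "\<dots> = (-1) * E (\<lambda>y. pmono d j y * P y)" by (rule E_cmult)
    finally show ?thesis using P_orth[OF True j] by simp
  next
    case False
    then have jn: "j \<in> mindex_eq d n" using j by (auto simp: mindex_le_def mindex_eq_def)
    have bP: "bdd_meas d P" using P by (auto simp: Vspace_def intro: bdd_meas_polys)
    have "E (\<lambda>y. (Kop n (pmono d j) y - pmono d j y) * P y)
        = E (\<lambda>y. \<Sum>r\<in>mbox d j - {j}. (box_coeff j r * kcoef \<theta> n (\<Sum>i<d. r i) n) * (pmono d r y * P y))"
      by (intro E_cong) (simp add: Kop_pmono_top[OF jn] sum_distrib_left sum_distrib_right mult_ac)
    also have "\<dots> = (\<Sum>r\<in>mbox d j - {j}. (box_coeff j r * kcoef \<theta> n (\<Sum>i<d. r i) n) * E (\<lambda>y. pmono d r y * P y))"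
      by (subst E_sum) (auto intro!: bdd_meas_cmult bdd_meas_mult bdd_meas_pmono bP simp: E_cmult finite_mbox)
    also have "\<dots> = 0"
    proof (intro sum.neutral ballI)
      fix r assume r: "r \<in> mbox d j - {j}"
      then have "(\<Sum>i<d. r i) < n" using mbox_proper_degree[OF j r] jn by (simp add: mindex_eq_def)
      moreover have "r \<in> mindex_le d n" using r calculation by (auto simp: mbox_def mindex_le_def)
      ultimately show "box_coeff j r * kcoef \<theta> n (\<Sum>i<d. r i) n * E (\<lambda>y. pmono d r y * P y) = 0"
        using P_orth by simp
    qed
    finally show ?thesis .
  qed
qed

lemma Kop_defect_orth:
  assumes f: "f \<in> polys d n" and P: "P \<in> Vspace d (symparam \<theta> d) n"
  shows "E (\<lambda>y. (Kop n f y - f y) * P y) = 0"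
proof -
  obtain c where c: "f = (\<lambda>y. \<Sum>j\<in>mindex_le d n. c j * pmono d j y)" using f by (auto simp: polys_def)
  have bP: "bdd_meas d P" using P by (auto simp: Vspace_def intro: bdd_meas_polys)
  have pointwise: "(Kop n f y - f y) * P y
      = (\<Sum>j\<in>mindex_le d n. c j * ((Kop n (pmono d j) y - pmono d j y) * P y))" for y
  proof -
    have "(\<Sum>j\<in>mindex_le d n. c j * ((Kop n (pmono d j) y - pmono d j y) * P y))
        = ((\<Sum>j\<in>mindex_le d n. c j * Kop n (pmono d j) y) - (\<Sum>j\<in>mindex_le d n. c j * pmono d j y)) * P y"
      by (simp only: sum_subtractf sum_distrib_right left_diff_distrib right_diff_distrib mult.assoc)
    then show ?thesis unfolding c Kop_lin[OF finite_mindex_le] by simp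
  qed
  have "E (\<lambda>y. (Kop n f y - f y) * P y)
      = E (\<lambda>y. \<Sum>j\<in>mindex_le d n. c j * ((Kop n (pmono d j) y - pmono d j y) * P y))"
    unfolding pointwise ..
  also have "\<dots> = (\<Sum>j\<in>mindex_le d n. c j * E (\<lambda>y. (Kop n (pmono d j) y - pmono d j y) * P y))"
    by (subst E_sum[OF finite_mindex_le])
      (auto intro!: bdd_meas_cmult bdd_meas_mult bdd_meas_diff bdd_meas_polys[OF Kop_polys]
        bdd_meas_pmono bP simp: E_cmult)
  also have "\<dots> = 0" using Kop_pmono_defect_orth[OF _ P] by simp
  finally show ?thesis .
qed

end

section \<open>G_n is the reproducing kernel of V_n\<close>

context dirichlet
begin

lemma onb_coefficient:
  fixes K :: nat
  assumes ob: "\<forall>j<K. \<forall>k<K. dir_inner d \<beta> (P j) (P k) = (if j = k then 1 else 0)"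
    and bP: "\<forall>k<K. bdd_meas d (P k)"
    and h: "\<forall>y\<in>dsimplex d. h y = (\<Sum>k<K. c k * P k y)" and j: "j < K"
  shows "E (\<lambda>y. h y * P j y) = c j"
proof -
  have "E (\<lambda>y. h y * P j y) = E (\<lambda>y. \<Sum>k<K. c k * (P k y * P j y))"
    by (rule E_cong) (simp add: h sum_distrib_right mult.assoc)
  also have "\<dots> = (\<Sum>k<K. E (\<lambda>y. c k * (P k y * P j y)))"
    by (rule E_sum) (use bP j in \<open>auto intro!: bdd_meas_cmult bdd_meas_mult\<close>)
  also have "\<dots> = (\<Sum>k<K. c k * (if k = j then 1 else 0))"
    using ob j by (simp add: E_cmult dir_inner_def)
  also have "\<dots> = (\<Sum>k<K. if k = j then c j else 0)" by (intro sum.cong) auto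
  also have "\<dots> = c j" using j by simp
  finally show ?thesis .
qed

end

context sym_dirichlet
begin

abbreviation V where "V n \<equiv> Vspace d (symparam \<theta> d) n"

lemma bdd_meas_V: "f \<in> V n \<Longrightarrow> bdd_meas d f"
  by (auto simp: Vspace_def intro: bdd_meas_polys)

lemma Gker_in_V: assumes x: "x \<in> dsimplex d" shows "Gker n x \<in> V n"
  unfolding Vspace_def
proof (intro CollectI conjI allI impI ballI)
  show "Gker n x \<in> polys d n" by (rule Gker_polys)
  fix m g assume "m < n" "g \<in> polys d m"
  then show "dir_inner d (symparam \<theta> d) (Gker n x) g = 0"
    unfolding dir_inner_def using Kop_poly_low[OF _ _ x] by (simp add: Kop_def)
qed

lemma onb_orth_zero:
  assumes onbP: "onb d (symparam \<theta> d) (V n) K P"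
    and H: "H \<in> V n" and orth: "\<forall>k<K. E (\<lambda>y. H y * P k y) = 0" and z: "z \<in> dsimplex d"
  shows "H z = 0"
proof -
  have ob: "\<forall>j<K. \<forall>k<K. dir_inner d (symparam \<theta> d) (P j) (P k) = (if j = k then 1 else 0)"
    and bP: "\<forall>k<K. bdd_meas d (P k)" using onbP bdd_meas_V by (auto simp: onb_def)
  obtain e where e: "\<forall>y\<in>dsimplex d. H y = (\<Sum>k<K. e k * P k y)" using onbP H unfolding onb_def by blast
  have "e k = 0" if "k < K" for k using onb_coefficient[OF ob bP e that] orth that by simp
  then show ?thesis using e z by simp
qed

text \<open>A_n fixes V_n: for f in V_n the defect A_n f - f lies in V_n (self-adjointness and the
  annihilation of lower degrees) and is orthogonal to V_n.\<close>

lemma Kop_fixes_V: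
  assumes onbP: "onb d (symparam \<theta> d) (V n) K P"
    and f: "f \<in> V n" and z: "z \<in> dsimplex d"
  shows "Kop n f z = f z"
proof -
  have fp: "f \<in> polys d n" using f by (simp add: Vspace_def)
  have bf: "bdd_meas d f" by (rule bdd_meas_polys[OF fp])
  define H where "H y = Kop n f y - f y" for y
  have "H \<in> V n"
    unfolding Vspace_def
  proof (intro CollectI conjI allI impI ballI)
    show "H \<in> polys d n" unfolding H_def[abs_def] by (rule polys_diff[OF Kop_polys[OF bf] fp])
    fix m g assume m: "m < n" and g: "g \<in> polys d m"
    have bg: "bdd_meas d g" by (rule bdd_meas_polys[OF g])
    have "dir_inner d (symparam \<theta> d) H g = E (\<lambda>y. Kop n g y * f y) - E (\<lambda>y. f y * g y)"
      unfolding dir_inner_def H_def left_diff_distrib Kop_self_adjoint[OF bf bg, symmetric]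
      by (rule E_diff) (intro bdd_meas_mult bdd_meas_polys[OF Kop_polys] bf bg)+
    also have "E (\<lambda>y. Kop n g y * f y) = E (\<lambda>y. 0)" by (rule E_cong) (simp add: Kop_poly_low[OF g m])
    also have "E (\<lambda>y. f y * g y) = 0" using f m g by (auto simp: Vspace_def dir_inner_def)
    finally show "dir_inner d (symparam \<theta> d) H g = 0" by (simp add: E_zero)
  qed
  moreover have "\<forall>k<K. E (\<lambda>y. H y * P k y) = 0"
  proof (intro allI impI)
    fix k assume "k < K"
    then have "P k \<in> V n" using onbP by (simp add: onb_def)
    then show "E (\<lambda>y. H y * P k y) = 0" unfolding H_def by (rule Kop_defect_orth[OF fp])
  qed
  ultimately have "H z = 0" by (rule onb_orth_zero[OF onbP _ _ z])
  then show ?thesis by (simp add: H_def)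
qed

text \<open>Reproducing kernel argument: the orthonormal-basis kernel of V_n equals G_n.\<close>

lemma okernel_eq_Gker:
  assumes onbP: "onb d (symparam \<theta> d) (V n) K P"
    and x: "x \<in> dsimplex d" and y: "y \<in> dsimplex d"
  shows "okernel K P x y = Gker n x y"
proof -
  have ob: "\<forall>j<K. \<forall>k<K. dir_inner d (symparam \<theta> d) (P j) (P k) = (if j = k then 1 else 0)"
    and PV: "\<forall>k<K. P k \<in> V n" using onbP by (auto simp: onb_def)
  have bP: "\<forall>k<K. bdd_meas d (P k)" using PV bdd_meas_V by blast
  obtain c where c: "\<forall>y\<in>dsimplex d. Gker n x y = (\<Sum>k<K. c k * P k y)"
    using onbP Gker_in_V[OF x] unfolding onb_def by blast
  have "c k = P k x" if k: "k < K" for k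
  proof -
    have "c k = Kop n (P k) x" using onb_coefficient[OF ob bP c k] by (simp add: Kop_def)
    also have "\<dots> = P k x" using Kop_fixes_V[OF onbP _ x] PV k by simp
    finally show ?thesis .
  qed
  then show ?thesis using c y by (simp add: okernel_def)
qed

end

section \<open>Symmetrisation\<close>

context sym_dirichlet
begin

lemma E_symmetric_factor:
  assumes S: "S \<in> polys d n" "symmetric_fun d S" and g: "g \<in> polys d m" and \<sigma>: "\<sigma> \<in> Sym d"
  shows "E (\<lambda>x. S x * g (perm_act \<sigma> x)) = E (\<lambda>x. S x * g x)"
proof -
  have "E (\<lambda>x. S x * g (perm_act \<sigma> x)) = E (\<lambda>x. S (perm_act \<sigma> x) * g (perm_act \<sigma> x))"
    using S(2) \<sigma> by (intro E_cong) (simp add: symmetric_fun_def)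
  also have "\<dots> = E (\<lambda>x. S x * g x)"
    by (rule E_perm_invariant[OF \<sigma> polys_mult[OF S(1) g]])
  finally show ?thesis .
qed

text \<open>Symmetric polynomials orthogonal to the symmetric polynomials of lower degree are
  orthogonal to all polynomials of lower degree: pair with the symmetrisation of g.\<close>

lemma Vsym_subset_V: assumes S: "S \<in> Vsym d (symparam \<theta> d) n" shows "S \<in> V n"
  unfolding Vspace_def
proof (intro CollectI conjI allI impI ballI)
  have Sp: "S \<in> polys d n" and Ss: "symmetric_fun d S"
    and So: "\<forall>m<n. \<forall>g\<in>polys d m. symmetric_fun d g \<longrightarrow> dir_inner d (symparam \<theta> d) S g = 0"
    using S by (auto simp: Vsym_def)
  show "S \<in> polys d n" by (rule Sp)
  fix m g assume m: "m < n" and g: "g \<in> polys d m"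
  have g_perm: "(\<lambda>x. g (perm_act \<sigma> x)) \<in> polys d m" if "\<sigma> \<in> Sym d" for \<sigma>
    using polys_perm g that by (simp add: Sym_def)
  define sg where "sg x = (1 / fact d) * (\<Sum>\<sigma>\<in>Sym d. g (perm_act \<sigma> x))" for x
  have "sg \<in> polys d m" unfolding sg_def[abs_def]
    by (intro polys_cmult polys_finsum finite_Sym g_perm)
  moreover have "symmetric_fun d sg" unfolding sg_def[abs_def] by (rule symmetric_fun_average)
  ultimately have "0 = E (\<lambda>x. S x * sg x)" using So m by (simp add: dir_inner_def)
  also have "\<dots> = E (\<lambda>x. (1 / fact d) * (\<Sum>\<sigma>\<in>Sym d. S x * g (perm_act \<sigma> x)))"
    unfolding sg_def by (simp only: sum_distrib_left mult.left_commute)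
  also have "\<dots> = (1 / fact d) * (\<Sum>\<sigma>\<in>Sym d. E (\<lambda>x. S x * g (perm_act \<sigma> x)))"
    by (subst E_cmult, subst E_sum[OF finite_Sym])
      (auto intro!: bdd_meas_mult bdd_meas_polys[OF Sp] bdd_meas_polys[OF g_perm])
  also have "\<dots> = E (\<lambda>x. S x * g x)"
    by (simp add: E_symmetric_factor[OF Sp Ss g] card_Sym)
  finally show "dir_inner d (symparam \<theta> d) S g = 0" by (simp add: dir_inner_def)
qed

lemma E_average_Gker: assumes "bdd_meas d g"
  shows "E (\<lambda>z. (1 / fact d) * (\<Sum>\<sigma>\<in>Sym d. Gker n (perm_act \<sigma> x) z) * g z)
       = (1 / fact d) * (\<Sum>\<sigma>\<in>Sym d. Kop n g (perm_act \<sigma> x))"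
proof -
  have "E (\<lambda>z. (1 / fact d) * (\<Sum>\<sigma>\<in>Sym d. Gker n (perm_act \<sigma> x) z) * g z)
      = E (\<lambda>z. (1 / fact d) * (\<Sum>\<sigma>\<in>Sym d. Gker n (perm_act \<sigma> x) z * g z))"
    by (simp only: sum_distrib_right mult.assoc)
  also have "\<dots> = (1 / fact d) * E (\<lambda>z. \<Sum>\<sigma>\<in>Sym d. Gker n (perm_act \<sigma> x) z * g z)"
    by (rule E_cmult)
  also have "\<dots> = (1 / fact d) * (\<Sum>\<sigma>\<in>Sym d. Kop n g (perm_act \<sigma> x))"
    unfolding Kop_def by (subst E_sum[OF finite_Sym]) (auto intro: bdd_meas_mult bdd_meas_Gker assms)
  finally show ?thesis .
qed

lemma average_Gker_in_Vsym: assumes x: "x \<in> dsimplex d"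
  shows "(\<lambda>z. (1 / fact d) * (\<Sum>\<sigma>\<in>Sym d. Gker n (perm_act \<sigma> x) z)) \<in> Vsym d (symparam \<theta> d) n"
  unfolding Vsym_def
proof (intro CollectI conjI allI impI ballI)
  show "(\<lambda>z. (1 / fact d) * (\<Sum>\<sigma>\<in>Sym d. Gker n (perm_act \<sigma> x) z)) \<in> polys d n"
    by (intro polys_cmult polys_finsum finite_Sym Gker_polys)
  show "symmetric_fun d (\<lambda>z. (1 / fact d) * (\<Sum>\<sigma>\<in>Sym d. Gker n (perm_act \<sigma> x) z))"
    unfolding symmetric_fun_def
  proof (intro ballI)
    fix \<tau> z assume \<tau>: "\<tau> \<in> Sym d"
    show "(1 / fact d) * (\<Sum>\<sigma>\<in>Sym d. Gker n (perm_act \<sigma> x) (perm_act \<tau> z))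
             = (1 / fact d) * (\<Sum>\<sigma>\<in>Sym d. Gker n (perm_act \<sigma> x) z)"
      using sum_Sym_right[OF Sym_inv[OF \<tau>], of "\<lambda>\<sigma>. Gker n (perm_act \<sigma> x) z"]
      by (simp add: Gker_perm[OF \<tau>] perm_act_comp)
  qed
  fix m g assume m: "m < n" and g: "g \<in> polys d m"
  show "dir_inner d (symparam \<theta> d) (\<lambda>z. (1 / fact d) * (\<Sum>\<sigma>\<in>Sym d. Gker n (perm_act \<sigma> x) z)) g = 0"
    unfolding dir_inner_def E_average_Gker[OF bdd_meas_polys[OF g]]
    using Kop_poly_low[OF g m perm_act_simplex[OF _ x]] by simp
qed

lemma okernel_sym_eq_average:
  assumes onbP: "onb d (symparam \<theta> d) (V n) K P"
    and onbS: "onb d (symparam \<theta> d) (Vsym d (symparam \<theta> d) n) L S"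
    and x: "x \<in> dsimplex d" and y: "y \<in> dsimplex d"
  shows "okernel L S x y = (1 / fact d) * (\<Sum>\<sigma>\<in>Sym d. Gker n (perm_act \<sigma> x) y)"
proof -
  have ob: "\<forall>j<L. \<forall>k<L. dir_inner d (symparam \<theta> d) (S j) (S k) = (if j = k then 1 else 0)"
    and SV: "\<forall>k<L. S k \<in> Vsym d (symparam \<theta> d) n" using onbS by (auto simp: onb_def)
  have bS: "\<forall>k<L. bdd_meas d (S k)" using SV Vsym_subset_V bdd_meas_V by blast
  have span: "\<forall>f\<in>Vsym d (symparam \<theta> d) n. \<exists>c. \<forall>z\<in>dsimplex d. f z = (\<Sum>k<L. c k * S k z)"
    using onbS by (simp add: onb_def)
  from bspec[OF span average_Gker_in_Vsym[OF x, where n = n]] obtain c where c: "\<forall>z\<in>dsimplex d. (1 / fact d) * (\<Sum>\<sigma>\<in>Sym d. Gker n (perm_act \<sigma> x) z)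
                                       = (\<Sum>k<L. c k * S k z)" by auto
  have "c k = S k x" if k: "k < L" for k
  proof -
    have "Kop n (S k) (perm_act \<sigma> x) = S k x" if "\<sigma> \<in> Sym d" for \<sigma>
      using Kop_fixes_V[OF onbP Vsym_subset_V perm_act_simplex[OF that x]] SV k that x
      by (simp add: Vsym_def symmetric_fun_def)
    then have "(1 / fact d) * (\<Sum>\<sigma>\<in>Sym d. Kop n (S k) (perm_act \<sigma> x)) = S k x"
      by (simp add: card_Sym)
    then show ?thesis
      using onb_coefficient[OF ob bS c k] E_average_Gker[of "S k" n x] bS k by simp
  qed
  then show ?thesis using c y by (simp add: okernel_def)
qed

lemma double_average_Gker:
  "(\<Sum>\<sigma>\<in>Sym d. \<Sum>\<tau>\<in>Sym d. Gker n (perm_act \<sigma> x) (perm_act \<tau> y))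
     = fact d * (\<Sum>\<sigma>\<in>Sym d. Gker n (perm_act \<sigma> x) y)"
proof -
  have "(\<Sum>\<sigma>\<in>Sym d. \<Sum>\<tau>\<in>Sym d. Gker n (perm_act \<sigma> x) (perm_act \<tau> y))
      = (\<Sum>\<tau>\<in>Sym d. \<Sum>\<sigma>\<in>Sym d. Gker n (perm_act (\<sigma> \<circ> inv \<tau>) x) y)"
    by (subst sum.swap) (simp add: Gker_perm perm_act_comp)
  also have "\<dots> = (\<Sum>\<tau>\<in>Sym d. \<Sum>\<sigma>\<in>Sym d. Gker n (perm_act \<sigma> x) y)"
    by (intro sum.cong refl sum_Sym_right[OF Sym_inv])
  finally show ?thesis by (simp add: card_Sym)
qed

lemma average_Gker_xi:
  "(1 / fact d) * (\<Sum>\<sigma>\<in>Sym d. Gker n (perm_act \<sigma> x) y)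
     = (\<Sum>m\<le>n. a_coef \<theta> n m * ((1 / fact d) * (\<Sum>\<sigma>\<in>Sym d. xi \<theta> d m (perm_act \<sigma> x) y)))"
  unfolding Gker_def sum_distrib_left by (subst sum.swap) (simp add: mult_ac)

end

theorem proposition4p1:
  fixes d n K L :: nat and \<theta> :: real
    and P S :: "nat \<Rightarrow> (nat \<Rightarrow> real) \<Rightarrow> real"
    and x y :: "nat \<Rightarrow> real"
  assumes "2 \<le> d" and "0 < \<theta>"
    and "onb d (symparam \<theta> d) (Vspace d (symparam \<theta> d) n) K P"
    and "onb d (symparam \<theta> d) (Vsym d (symparam \<theta> d) n) L S"
    and "x \<in> dsimplex d" and "y \<in> dsimplex d"
  shows "okernel L S x y
           = (1 / fact d) * (\<Sum>\<sigma>\<in>Sym d. okernel K P (perm_act \<sigma> x) y)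
       \<and> (1 / fact d) * (\<Sum>\<sigma>\<in>Sym d. okernel K P (perm_act \<sigma> x) y)
           = (1 / (fact d)^2) * (\<Sum>\<sigma>\<in>Sym d. \<Sum>\<tau>\<in>Sym d. okernel K P (perm_act \<sigma> x) (perm_act \<tau> y))
       \<and> (1 / (fact d)^2) * (\<Sum>\<sigma>\<in>Sym d. \<Sum>\<tau>\<in>Sym d. okernel K P (perm_act \<sigma> x) (perm_act \<tau> y))
           = (\<Sum>m\<le>n. a_coef \<theta> n m * ((1 / fact d) * (\<Sum>\<sigma>\<in>Sym d. xi \<theta> d m (perm_act \<sigma> x) y)))"
proof -
  interpret sym_dirichlet \<theta> d using assms(1,2) by unfold_locales
  define R where "R = (1 / fact d) * (\<Sum>\<sigma>\<in>Sym d. Gker n (perm_act \<sigma> x) y)"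
  have Q_eq_G: "okernel K P (perm_act \<sigma> x) z = Gker n (perm_act \<sigma> x) z"
    if "\<sigma> \<in> Sym d" "z \<in> dsimplex d" for \<sigma> z
    using okernel_eq_Gker[OF assms(3) perm_act_simplex[OF that(1) assms(5)] that(2)] .
  have "okernel L S x y = R"
    unfolding R_def by (rule okernel_sym_eq_average[OF assms(3-6)])
  moreover have "(1 / fact d) * (\<Sum>\<sigma>\<in>Sym d. okernel K P (perm_act \<sigma> x) y) = R"
    unfolding R_def using Q_eq_G[OF _ assms(6)] by simp
  moreover have "(1 / (fact d)^2) * (\<Sum>\<sigma>\<in>Sym d. \<Sum>\<tau>\<in>Sym d. okernel K P (perm_act \<sigma> x) (perm_act \<tau> y)) = R"
    unfolding R_def using Q_eq_G[OF _ perm_act_simplex[OF _ assms(6)]]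
    by (simp add: double_average_Gker power2_eq_square)
  moreover have "(\<Sum>m\<le>n. a_coef \<theta> n m * ((1 / fact d) * (\<Sum>\<sigma>\<in>Sym d. xi \<theta> d m (perm_act \<sigma> x) y))) = R"
    unfolding R_def by (rule average_Gker_xi[symmetric])
  ultimately show ?thesis by simp
qed

end
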